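(* Let $\Omega\subset\{|z|>e^\gamma\}$ ($\gamma\in(0,1)$) be an unbounded simply connected domain and $\varphi:\mathcal H\to\Omega$ a conformal map with $|\varphi(\xi_n)|\to\infty$ whenever $|\xi_n|\to\infty$, such that for some $M$ we have $|\varphi(\xi)|\le M|\varphi(\xi')|$ for all $\xi,\xi'\in Q_T\setminus Q_{T/8}$ and all large $T$. Then the function $\beta_\infty:\mathbb R\to\mathbb R$, $\beta_\infty(t)=\limsup_{T\to+\infty}\beta_{\varphi_T}(1/T,t)$, is convex, with $\beta_\infty(0)=0$ and $\beta_\infty(2)\le1$.
   Context: $\mathcal H=\{\Re\xi>0\}$; $Q_T=\{0<\Re\xi<4T,\ |\Im\xi|<4T\}$; $\varphi_T(\xi)=\varphi(T\xi)/|\varphi(T)|$; $\beta_h(r,t)=\log\int_I|h'(r+iy)|^tdy/\log(1/r)$ with $I=[-2,-1]\cup[1,2]$. *)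

theory Defs
  imports "HOL-Analysis.Analysis" "HOL-Library.Liminf_Limsup"
begin

definition halfplane :: "complex set" where
  "halfplane = {\<xi>. Re \<xi> > 0}"

definition QT :: "real \<Rightarrow> complex set" where
  "QT T = {\<xi>. 0 < Re \<xi> \<and> Re \<xi> < 4 * T \<and> \<bar>Im \<xi>\<bar> < 4 * T}"

definition phiT :: "(complex \<Rightarrow> complex) \<Rightarrow> real \<Rightarrow> complex \<Rightarrow> complex" where
  "phiT \<phi> T = (\<lambda>\<xi>. \<phi> (of_real T * \<xi>) / of_real (cmod (\<phi> (of_real T))))"

definition Iset :: "real set" where
  "Iset = {-2..-1} \<union> {1..2}"

definition beta :: "(complex \<Rightarrow> complex) \<Rightarrow> real \<Rightarrow> real \<Rightarrow> real" where
  "beta h r t = ln (integral Iset (\<lambda>y. cmod (deriv h (Complex r y)) powr t)) / ln (1 / r)"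

definition beta_inf :: "(complex \<Rightarrow> complex) \<Rightarrow> real \<Rightarrow> ereal" where
  "beta_inf \<phi> t = Limsup at_top (\<lambda>T. ereal (beta (phiT \<phi> T) (1 / T) t))"

end

theory Submission
  imports Defs "HOL-Complex_Analysis.Complex_Analysis"
begin

text \<open>Write \<open>g\<^sub>T(y) = \<bar>\<phi>\<^sub>T'(1/T + iy)\<bar>\<close>, so that \<open>\<beta>\<^bsub>\<phi>\<^sub>T\<^esub>(1/T, t) = ln (\<integral>\<^sub>I g\<^sub>T\<^sup>t) / ln T\<close>.
  By Hoelder's inequality \<open>t \<mapsto> ln (\<integral>\<^sub>I g\<^sub>T\<^sup>t)\<close> is convex, and convexity passes to the limsup once the
  family is bounded. Boundedness, and \<open>\<beta>\<^sub>\<infinity>(0) = 0\<close>, follow from \<open>\<bar>ln g\<^sub>T\<bar> = O(ln T)\<close> on \<open>I\<close>: the doubling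
  condition makes \<open>\<bar>\<phi>(1 + iTy)\<bar>\<close> comparable to the normalisation \<open>\<bar>\<phi>(T)\<bar>\<close>; Schottky's theorem bounds
  \<open>\<bar>\<phi>'\<bar>\<close> by \<open>\<bar>\<phi>\<bar>/Re\<close> from above, and a Schwarz lemma for \<open>\<phi>\<^sup>-\<^sup>1\<close> bounds \<open>\<bar>\<phi>'\<bar>\<close> from below by the
  distance from \<open>\<phi>\<close> to \<open>\<partial>\<Omega>\<close>, which, relative to \<open>\<bar>\<phi>\<bar>\<close>, decays at most polynomially along \<open>Re = 1\<close> by
  chaining Schottky's distortion estimate. Finally \<open>\<integral>\<^sub>I g\<^sub>T\<^sup>2 = O(T)\<close>, giving \<open>\<beta>\<^sub>\<infinity>(2) \<le> 1\<close>: images of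
  disjoint discs under the univalent \<open>\<phi>\<close> contain disjoint discs of radius comparable to \<open>\<bar>\<phi>'\<bar>\<close>, all
  inside a disc of radius \<open>O(\<bar>\<phi>(T)\<bar>)\<close>, and comparing areas bounds Riemann sums of \<open>\<bar>\<phi>'\<bar>\<^sup>2\<close>.\<close>

text \<open>The bound of the library lemma \<open>Schottky\<close> for \<open>\<bar>g 0\<bar> \<le> 1\<close> on the closed unit disc, at radius \<open>2/3\<close>.\<close>
definition schottky_const :: real where
  "schottky_const = exp (pi * exp (pi * (2 + 2 * 1 + 12 * (2/3) / (1 - 2/3))))"

lemma schottky_const_ge_1: "schottky_const \<ge> 1"
  unfolding schottky_const_def by simp

lemma schottky_two_thirds:
  assumes "g holomorphic_on cball 0 1" "cmod (g 0) \<le> 1"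
    and "\<And>z. z \<in> cball 0 1 \<Longrightarrow> g z \<noteq> 0 \<and> g z \<noteq> 1" and "cmod z \<le> 2/3"
  shows "cmod (g z) \<le> schottky_const"
  unfolding schottky_const_def by (rule Schottky[of g 1 "2/3" z]) (use assms in auto)

text \<open>Schottky applied to \<open>-g\<close> and \<open>-1/g\<close>, which omit \<open>0\<close> and \<open>1\<close> when \<open>g\<close> omits \<open>0\<close> and \<open>-1\<close>.\<close>
lemma schottky_two_sided:
  assumes holg: "g holomorphic_on cball 0 1" and g0: "g 0 = 1"
    and omits: "\<And>z. z \<in> cball 0 1 \<Longrightarrow> g z \<noteq> 0 \<and> g z \<noteq> -1" and z: "cmod z \<le> 2/3"
  shows "cmod (g z) \<le> schottky_const" and "1 \<le> schottky_const * cmod (g z)"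
proof -
  have neg_omits: "- g w \<noteq> 0 \<and> - g w \<noteq> 1" if "w \<in> cball 0 1" for w
    using omits[OF that] by (auto simp: minus_equation_iff)
  have "cmod (- g z) \<le> schottky_const"
    by (rule schottky_two_thirds[of "\<lambda>w. - g w", OF _ _ neg_omits])
      (use holg g0 z in \<open>auto intro!: holomorphic_intros\<close>)
  then show "cmod (g z) \<le> schottky_const" by simp
  have inv_omits: "- 1 / g w \<noteq> 0 \<and> - 1 / g w \<noteq> 1" if "w \<in> cball 0 1" for w
    using omits[OF that] by (metis divide_eq_0_iff divide_eq_1_iff zero_neq_neg_one)
  have "cmod (- 1 / g z) \<le> schottky_const"
    by (rule schottky_two_thirds[of "\<lambda>w. - 1 / g w", OF _ _ inv_omits])
      (use holg g0 omits z in \<open>auto intro!: holomorphic_intros\<close>)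
  moreover have "g z \<noteq> 0" using omits z by auto
  ultimately show "1 \<le> schottky_const * cmod (g z)"
    by (simp add: norm_divide divide_le_eq mult.commute)
qed

lemma holomorphic_sqrt_omitting_minus_one:
  assumes holh: "h holomorphic_on S" and S: "contractible S" "0 \<in> S"
    and h0: "h 0 = 1" and hnz: "\<And>\<zeta>. \<zeta> \<in> S \<Longrightarrow> h \<zeta> \<noteq> 0"
    and h1: "\<And>\<zeta>. \<zeta> \<in> S \<Longrightarrow> h \<zeta> = 1 \<Longrightarrow> \<zeta> = 0"
  obtains g where "g holomorphic_on S" "g 0 = 1" "\<And>\<zeta>. \<zeta> \<in> S \<Longrightarrow> h \<zeta> = g \<zeta> ^ 2"
    "\<And>\<zeta>. \<zeta> \<in> S \<Longrightarrow> g \<zeta> \<noteq> 0 \<and> g \<zeta> \<noteq> -1"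
proof -
  obtain g0 where holg0: "g0 holomorphic_on S" and hg0: "\<And>\<zeta>. \<zeta> \<in> S \<Longrightarrow> h \<zeta> = g0 \<zeta> ^ 2"
    using contractible_imp_holomorphic_sqrt[OF holh S(1) hnz] by metis
  have sq: "g0 0 ^ 2 = 1" using hg0[OF S(2)] h0 by simp
  define g where "g = (\<lambda>\<zeta>. g0 0 * g0 \<zeta>)"
  have hg: "h \<zeta> = g \<zeta> ^ 2" if "\<zeta> \<in> S" for \<zeta>
    using hg0[OF that] sq by (simp add: g_def power_mult_distrib)
  have g0_eq: "g 0 = 1" using sq by (simp add: g_def power2_eq_square)
  show ?thesis
  proof
    show "g holomorphic_on S" unfolding g_def by (intro holomorphic_intros holg0)
    show "g 0 = 1" by (rule g0_eq)
    show "h \<zeta> = g \<zeta> ^ 2" if "\<zeta> \<in> S" for \<zeta> using hg[OF that] .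
    show "g \<zeta> \<noteq> 0 \<and> g \<zeta> \<noteq> -1" if "\<zeta> \<in> S" for \<zeta>
    proof
      show "g \<zeta> \<noteq> 0" using hg[OF that] hnz[OF that] by auto
      show "g \<zeta> \<noteq> -1"
      proof
        assume "g \<zeta> = -1"
        then have "\<zeta> = 0" using h1[OF that] hg[OF that] by simp
        with \<open>g \<zeta> = -1\<close> g0_eq show False by simp
      qed
    qed
  qed
qed

text \<open>Near a point of a disc of univalence, the distance of \<open>f\<close> to an omitted value changes at
  most by the factor \<open>schottky_const\<^sup>2\<close>: a normalised square root of \<open>(q - f) / (q - f z\<^sub>0)\<close>
  omits \<open>0\<close> and \<open>-1\<close>, so Schottky's theorem applies.\<close>
lemma univalent_dist_to_omitted_value:
  fixes f :: "complex \<Rightarrow> complex"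
  assumes holf: "f holomorphic_on ball z0 r" and injf: "inj_on f (ball z0 r)"
    and q: "q \<notin> f ` ball z0 r" and z: "cmod (z - z0) \<le> r / 2" and r: "r > 0"
  shows "cmod (f z - q) \<le> schottky_const\<^sup>2 * cmod (f z0 - q)"
    and "cmod (f z0 - q) \<le> schottky_const\<^sup>2 * cmod (f z - q)"
proof -
  define c where "c = complex_of_real (3 * r / 4)"
  have c: "c \<noteq> 0" "cmod c = 3 * r / 4" using r by (auto simp: c_def)
  have in_ball: "z0 + c * \<zeta> \<in> ball z0 r" if "\<zeta> \<in> cball 0 1" for \<zeta>
  proof -
    have "cmod (c * \<zeta>) \<le> cmod c" using that by (simp add: norm_mult mult_left_le)
    then show ?thesis using c r by (simp add: dist_norm)
  qed
  have z0_in: "z0 \<in> ball z0 r" using r by simp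
  have qz0: "q - f z0 \<noteq> 0" using q z0_in by force
  define h where "h = (\<lambda>\<zeta>. (q - f (z0 + c * \<zeta>)) / (q - f z0))"
  have holh: "h holomorphic_on cball 0 1" unfolding h_def
    by (intro holomorphic_intros holomorphic_on_compose_gen[OF _ holf, unfolded o_def])
      (auto simp: qz0 intro: in_ball)
  have h1: "\<zeta> = 0" if "\<zeta> \<in> cball 0 1" "h \<zeta> = 1" for \<zeta>
  proof -
    have "f (z0 + c * \<zeta>) = f z0" using that(2) qz0 by (simp add: h_def)
    then have "z0 + c * \<zeta> = z0" using injf in_ball[OF that(1)] z0_in by (meson inj_onD)
    then show ?thesis using c by simp
  qed
  obtain g where holg: "g holomorphic_on cball 0 1" and g0: "g 0 = 1"
    and hg: "\<And>\<zeta>. \<zeta> \<in> cball 0 1 \<Longrightarrow> h \<zeta> = g \<zeta> ^ 2"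
    and omits: "\<And>\<zeta>. \<zeta> \<in> cball 0 1 \<Longrightarrow> g \<zeta> \<noteq> 0 \<and> g \<zeta> \<noteq> -1"
    by (rule holomorphic_sqrt_omitting_minus_one[OF holh convex_imp_contractible[OF convex_cball]])
      (use q in_ball qz0 h1 in \<open>auto simp: h_def\<close>)
  define \<zeta> where "\<zeta> = (z - z0) / c"
  have \<zeta>: "cmod \<zeta> \<le> 2/3" using z r c by (simp add: \<zeta>_def norm_divide field_simps)
  have "h \<zeta> = (q - f z) / (q - f z0)" using c by (simp add: h_def \<zeta>_def)
  then have "q - f z = (g \<zeta>)\<^sup>2 * (q - f z0)" using hg[of \<zeta>] \<zeta> qz0 by (simp add: field_simps)
  then have eq: "cmod (f z - q) = (cmod (g \<zeta>))\<^sup>2 * cmod (f z0 - q)"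
    by (metis norm_minus_commute norm_mult norm_power)
  have up: "(cmod (g \<zeta>))\<^sup>2 \<le> schottky_const\<^sup>2"
    using schottky_two_sided(1)[OF holg g0 omits \<zeta>] by (intro power_mono) auto
  have lo: "1 \<le> schottky_const\<^sup>2 * (cmod (g \<zeta>))\<^sup>2"
    using schottky_two_sided(2)[OF holg g0 omits \<zeta>] by (simp add: one_le_power power_mult_distrib[symmetric])
  show "cmod (f z - q) \<le> schottky_const\<^sup>2 * cmod (f z0 - q)"
    unfolding eq by (rule mult_right_mono[OF up]) simp
  show "cmod (f z0 - q) \<le> schottky_const\<^sup>2 * cmod (f z - q)"
    using mult_right_mono[OF lo, of "cmod (f z0 - q)"] by (simp add: eq mult.assoc)
qed

lemma univalent_image_contains_ball:
  fixes f :: "complex \<Rightarrow> complex"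
  assumes holf: "f holomorphic_on ball z0 r" and injf: "inj_on f (ball z0 r)" and r: "r > 0"
  shows "ball (f z0) (r * cmod (deriv f z0) / (2 * (schottky_const\<^sup>2 + 1))) \<subseteq> f ` ball z0 r"
proof
  fix w assume w: "w \<in> ball (f z0) (r * cmod (deriv f z0) / (2 * (schottky_const\<^sup>2 + 1)))"
  show "w \<in> f ` ball z0 r"
  proof (rule ccontr)
    assume omitted: "w \<notin> f ` ball z0 r"
    have bound: "cmod (f x - f z0) \<le> (schottky_const\<^sup>2 + 1) * cmod (f z0 - w)"
      if "cmod (z0 - x) = r / 2" for x
    proof -
      have "cmod (f x - w) \<le> schottky_const\<^sup>2 * cmod (f z0 - w)"
        using univalent_dist_to_omitted_value(1)[OF holf injf omitted _ r] that
        by (simp add: norm_minus_commute)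
      then show ?thesis
        using norm_triangle_ineq[of "f x - w" "w - f z0"] by (simp add: norm_minus_commute algebra_simps)
    qed
    have sub: "cball z0 (r/2) \<subseteq> ball z0 r" using r by auto
    have "cmod ((deriv ^^ 1) (\<lambda>x. f x - f z0) z0)
            \<le> fact 1 * ((schottky_const\<^sup>2 + 1) * cmod (f z0 - w)) / (r/2) ^ 1"
      using holf sub r bound
      by (intro Cauchy_inequality)
        (auto intro!: holomorphic_intros continuous_intros
          intro: holomorphic_on_subset holomorphic_on_imp_continuous_on continuous_on_subset)
    moreover have "deriv (\<lambda>x. f x - f z0) z0 = deriv f z0"
      using holf r by (simp add: holomorphic_on_imp_differentiable_at)
    ultimately have "r * cmod (deriv f z0) / (2 * (schottky_const\<^sup>2 + 1)) \<le> cmod (f z0 - w)"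
      using r by (simp add: field_simps add_pos_nonneg)
    then show False using w by (simp add: dist_norm)
  qed
qed

lemma open_halfplane: "open halfplane"
  unfolding halfplane_def by (simp add: open_halfspace_Re_gt)

lemma ball_Re_subset_halfplane: "Re z > 0 \<Longrightarrow> ball z (Re z) \<subseteq> halfplane"
proof
  fix w assume "Re z > 0" "w \<in> ball z (Re z)"
  then have "\<bar>Re z - Re w\<bar> < Re z" using abs_Re_le_cmod[of "z - w"] by (simp add: dist_norm)
  then show "w \<in> halfplane" by (simp add: halfplane_def)
qed

lemma norm_diff_le_norm_add_cnj:
  assumes "Re w \<ge> 0" "Re z \<ge> 0"
  shows "cmod (w - z) \<le> cmod (w + cnj z)"
proof -
  have "(Re w - Re z)\<^sup>2 \<le> (Re w + Re z)\<^sup>2" using assms by (simp add: power2_eq_square algebra_simps)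
  then have "(cmod (w - z))\<^sup>2 \<le> (cmod (w + cnj z))\<^sup>2" by (simp add: cmod_power2)
  then show ?thesis by (simp add: power2_le_iff_abs_le)
qed

text \<open>Schwarz lemma for maps into the half-plane, via the Cayley transform
  \<open>(g - g w\<^sub>0) / (g + cnj (g w\<^sub>0))\<close> into the unit disc.\<close>
lemma norm_deriv_halfplane_valued_le:
  assumes holg: "g holomorphic_on ball w0 d" and d: "d > 0"
    and pos: "\<And>w. w \<in> ball w0 d \<Longrightarrow> Re (g w) > 0"
  shows "cmod (deriv g w0) \<le> 4 * Re (g w0) / d"
proof -
  define z where "z = g w0"
  have z: "Re z > 0" using pos d by (simp add: z_def)
  have den: "g w + cnj z \<noteq> 0" if "w \<in> ball w0 d" for w
    using pos[OF that] z by (metis cnj.sel(1) plus_complex.sel(1) zero_complex.sel(1) add_pos_pos less_irrefl)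
  define G where "G = (\<lambda>w. (g w - z) / (g w + cnj z))"
  have holG: "G holomorphic_on ball w0 d" unfolding G_def using holg den by (intro holomorphic_intros) auto
  have "cmod ((deriv ^^ 1) G w0) \<le> fact 1 * 1 / (d/2) ^ 1"
  proof (rule Cauchy_inequality)
    show "G holomorphic_on ball w0 (d/2)" by (rule holomorphic_on_subset[OF holG]) (use d in auto)
    show "continuous_on (cball w0 (d/2)) G"
      using holG d by (auto intro: holomorphic_on_imp_continuous_on continuous_on_subset)
    show "cmod (G w) \<le> 1" if "cmod (w0 - w) = d/2" for w
    proof -
      have w: "w \<in> ball w0 d" using that d by (simp add: dist_norm)
      show ?thesis
        using norm_diff_le_norm_add_cnj[of "g w" z] pos[OF w] z den[OF w]
        by (simp add: G_def norm_divide divide_le_eq)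
    qed
  qed (use d in auto)
  moreover have "(G has_field_derivative deriv g w0 / (2 * Re z)) (at w0)"
  proof -
    have "(g has_field_derivative deriv g w0) (at w0)"
      using holg d by (intro holomorphic_derivI[of _ "ball w0 d"]) auto
    then have "(G has_field_derivative
        (deriv g w0 * (z + cnj z) - (z - z) * deriv g w0) / ((z + cnj z) * (z + cnj z))) (at w0)"
      unfolding G_def using den[of w0] d by (auto intro!: derivative_eq_intros simp: z_def)
    moreover have "z + cnj z = 2 * Re z" by (simp add: complex_add_cnj)
    ultimately show ?thesis using z by (simp add: field_simps)
  qed
  ultimately have "cmod (deriv g w0) / (2 * Re z) \<le> 2 / d"
    using z by (simp add: DERIV_imp_deriv norm_divide)
  then show ?thesis using z d by (simp add: z_def field_simps)
qed

lemma ball_in_image_imp_norm_deriv_ge: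
  fixes \<phi> :: "complex \<Rightarrow> complex"
  assumes holo: "\<phi> holomorphic_on halfplane" and inj: "inj_on \<phi> halfplane"
    and z: "Re z > 0" and d: "d > 0" and ball: "ball (\<phi> z) d \<subseteq> \<phi> ` halfplane"
  shows "d / (4 * Re z) \<le> cmod (deriv \<phi> z)"
proof -
  obtain g where holg: "g holomorphic_on \<phi> ` halfplane"
    and dg: "\<And>\<xi>. \<xi> \<in> halfplane \<Longrightarrow> deriv \<phi> \<xi> * deriv g (\<phi> \<xi>) = 1"
    and gi: "\<And>\<xi>. \<xi> \<in> halfplane \<Longrightarrow> g (\<phi> \<xi>) = \<xi>"
    using holomorphic_has_inverse[OF holo open_halfplane inj] by metis
  have zH: "z \<in> halfplane" using z by (simp add: halfplane_def)
  have "cmod (deriv g (\<phi> z)) \<le> 4 * Re (g (\<phi> z)) / d"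
    using ball gi by (intro norm_deriv_halfplane_valued_le holomorphic_on_subset[OF holg] d)
      (auto simp: halfplane_def)
  moreover have "cmod (deriv \<phi> z) * cmod (deriv g (\<phi> z)) = 1"
    using dg[OF zH] by (metis norm_mult norm_one)
  ultimately have "cmod (deriv \<phi> z) * (4 * Re z / d) \<ge> 1"
    using gi[OF zH] by (metis mult_left_mono norm_ge_zero)
  then show ?thesis using z d by (simp add: field_simps)
qed

lemma norm_deriv_le_omitting_zero:
  fixes \<phi> :: "complex \<Rightarrow> complex"
  assumes holo: "\<phi> holomorphic_on halfplane" and inj: "inj_on \<phi> halfplane"
    and nz: "0 \<notin> \<phi> ` halfplane" and z0: "Re z0 > 0"
  shows "cmod (deriv \<phi> z0) \<le> 2 * schottky_const\<^sup>2 * cmod (\<phi> z0) / Re z0"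
proof -
  have sub: "ball z0 (Re z0) \<subseteq> halfplane" using z0 by (rule ball_Re_subset_halfplane)
  have holb: "\<phi> holomorphic_on ball z0 (Re z0)" using holo sub by (rule holomorphic_on_subset)
  have "cmod ((deriv ^^ 1) \<phi> z0) \<le> fact 1 * (schottky_const\<^sup>2 * cmod (\<phi> z0)) / (Re z0 / 2) ^ 1"
  proof (rule Cauchy_inequality)
    show "\<phi> holomorphic_on ball z0 (Re z0 / 2)" by (rule holomorphic_on_subset[OF holb]) (use z0 in auto)
    show "continuous_on (cball z0 (Re z0 / 2)) \<phi>"
      using holb z0 by (auto intro: holomorphic_on_imp_continuous_on continuous_on_subset)
    show "cmod (\<phi> x) \<le> schottky_const\<^sup>2 * cmod (\<phi> z0)" if "cmod (z0 - x) = Re z0 / 2" for x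
      using univalent_dist_to_omitted_value(1)[OF holb inj_on_subset[OF inj sub], of 0 x] nz sub z0 that
      by (auto simp: norm_minus_commute)
  qed (use z0 in auto)
  then show ?thesis by (simp add: field_simps)
qed

text \<open>\<open>\<epsilon>\<close> bounds the distance from \<open>\<phi> z\<close> to the boundary of \<open>\<phi> ` halfplane\<close>, relative to \<open>\<bar>\<phi> z\<bar>\<close>,
  from below.\<close>
definition covers_rel_ball :: "(complex \<Rightarrow> complex) \<Rightarrow> complex \<Rightarrow> real \<Rightarrow> bool" where
  "covers_rel_ball \<phi> z \<epsilon> \<longleftrightarrow> ball (\<phi> z) (\<epsilon> * cmod (\<phi> z)) \<subseteq> \<phi> ` halfplane"

lemma covers_rel_ball_mono: "covers_rel_ball \<phi> z \<epsilon> \<Longrightarrow> \<epsilon>' \<le> \<epsilon> \<Longrightarrow> covers_rel_ball \<phi> z \<epsilon>'"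
  unfolding covers_rel_ball_def by (meson mult_right_mono norm_ge_zero subset_ball order_trans)

lemma covers_rel_ball_step:
  fixes \<phi> :: "complex \<Rightarrow> complex"
  assumes holo: "\<phi> holomorphic_on halfplane" and inj: "inj_on \<phi> halfplane"
    and nz: "0 \<notin> \<phi> ` halfplane"
    and z0: "Re z0 > 0" and near: "cmod (z - z0) \<le> Re z0 / 2"
    and cov: "covers_rel_ball \<phi> z0 \<epsilon>" and \<epsilon>: "\<epsilon> \<ge> 0"
  shows "covers_rel_ball \<phi> z (\<epsilon> / schottky_const ^ 4)"
  unfolding covers_rel_ball_def
proof
  let ?K = "schottky_const\<^sup>2"
  have K: "?K \<ge> 1" using schottky_const_ge_1 by simp
  have sub: "ball z0 (Re z0) \<subseteq> halfplane" using z0 by (rule ball_Re_subset_halfplane)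
  note distortion = univalent_dist_to_omitted_value[OF holomorphic_on_subset[OF holo sub]
      inj_on_subset[OF inj sub] _ near z0]
  have norm_z: "cmod (\<phi> z) \<le> ?K * cmod (\<phi> z0)"
    using distortion(1)[of 0] nz sub by auto
  fix w assume w: "w \<in> ball (\<phi> z) (\<epsilon> / schottky_const ^ 4 * cmod (\<phi> z))"
  show "w \<in> \<phi> ` halfplane"
  proof (rule ccontr)
    assume omitted: "w \<notin> \<phi> ` halfplane"
    have "cmod (\<phi> z0 - w) \<le> ?K * cmod (\<phi> z - w)"
      using distortion(2)[of w] omitted sub by auto
    also have "\<dots> < ?K * (\<epsilon> / ?K\<^sup>2 * cmod (\<phi> z))"
      using w K by (intro mult_strict_left_mono) (auto simp: dist_norm norm_minus_commute)
    also have "\<dots> \<le> ?K * (\<epsilon> / ?K\<^sup>2 * (?K * cmod (\<phi> z0)))"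
      using norm_z \<epsilon> K by (intro mult_left_mono) auto
    also have "\<dots> = \<epsilon> * cmod (\<phi> z0)" using schottky_const_ge_1 by (simp add: power2_eq_square)
    finally show False using cov omitted unfolding covers_rel_ball_def by (auto simp: dist_norm)
  qed
qed

lemma covers_rel_ball_horizontal_step:
  fixes \<phi> :: "complex \<Rightarrow> complex"
  assumes holo: "\<phi> holomorphic_on halfplane" and inj: "inj_on \<phi> halfplane"
    and nz: "0 \<notin> \<phi> ` halfplane" and z0: "Re z0 > 0" and a: "\<bar>a - 1\<bar> \<le> 1/2"
    and cov: "covers_rel_ball \<phi> z0 \<epsilon>" and \<epsilon>: "\<epsilon> \<ge> 0"
  shows "covers_rel_ball \<phi> (Complex (a * Re z0) (Im z0)) (\<epsilon> / schottky_const ^ 4)"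
proof (rule covers_rel_ball_step[OF holo inj nz z0 _ cov \<epsilon>])
  have "Complex (a * Re z0) (Im z0) - z0 = of_real ((a - 1) * Re z0)"
    by (simp add: complex_eq_iff algebra_simps)
  then have "cmod (Complex (a * Re z0) (Im z0) - z0) = \<bar>a - 1\<bar> * Re z0"
    using z0 by (simp only: norm_of_real abs_mult)
  then show "cmod (Complex (a * Re z0) (Im z0) - z0) \<le> Re z0 / 2"
    using mult_right_mono[OF a, of "Re z0"] z0 by simp
qed

lemma covers_rel_ball_horizontal:
  fixes \<phi> :: "complex \<Rightarrow> complex"
  assumes holo: "\<phi> holomorphic_on halfplane" and inj: "inj_on \<phi> halfplane"
    and nz: "0 \<notin> \<phi> ` halfplane"
  shows "Re z0 > 0 \<Longrightarrow> Im z = Im z0 \<Longrightarrow> (2/3)^n * Re z0 \<le> Re z \<Longrightarrow> Re z \<le> (3/2)^n * Re z0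
    \<Longrightarrow> covers_rel_ball \<phi> z0 \<epsilon> \<Longrightarrow> \<epsilon> \<ge> 0 \<Longrightarrow> covers_rel_ball \<phi> z (\<epsilon> / (schottky_const ^ 4) ^ n)"
proof (induction n arbitrary: z0 \<epsilon>)
  case 0
  then have "z = z0" by (simp add: complex_eq_iff)
  then show ?case using 0 by simp
next
  case (Suc n)
  let ?K = "schottky_const ^ 4"
  have K: "?K \<ge> 1" using schottky_const_ge_1 by simp
  have via: "covers_rel_ball \<phi> z (\<epsilon> / ?K ^ Suc n)"
    if a: "\<bar>a - 1\<bar> \<le> 1/2" "(2/3)^n * (a * Re z0) \<le> Re z" "Re z \<le> (3/2)^n * (a * Re z0)" for a
  proof -
    have "a > 0" using a(1) by arith
    then have "covers_rel_ball \<phi> z (\<epsilon> / ?K / ?K ^ n)"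
      using a Suc.prems K covers_rel_ball_horizontal_step[OF holo inj nz _ a(1)]
      by (intro Suc.IH[of "Complex (a * Re z0) (Im z0)"]) auto
    then show ?thesis by (simp add: field_simps)
  qed
  consider (near) "\<bar>Re z - Re z0\<bar> \<le> Re z0 / 2" | (right) "Re z > 3/2 * Re z0"
    | (left) "Re z \<le> 2/3 * Re z0" by linarith
  then show ?case
  proof cases
    case near
    then have near': "\<bar>Re z / Re z0 - 1\<bar> \<le> 1/2" using Suc.prems(1) by (simp add: abs_le_iff field_simps)
    have "z = Complex (Re z / Re z0 * Re z0) (Im z0)" using Suc.prems(1,2) by (simp add: complex_eq_iff)
    then have "covers_rel_ball \<phi> z (\<epsilon> / ?K)"
      using covers_rel_ball_horizontal_step[OF holo inj nz Suc.prems(1) near' Suc.prems(5,6)] by simp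
    moreover have "\<epsilon> / ?K ^ Suc n \<le> \<epsilon> / ?K"
      using K Suc.prems(6) schottky_const_ge_1
      by (intro divide_left_mono) (auto simp: mult_le_cancel_left1 intro!: mult_pos_pos zero_less_power)
    ultimately show ?thesis by (rule covers_rel_ball_mono)
  next
    case right
    have "(2/3)^n * (3/2 * Re z0) \<le> 3/2 * Re z0"
      using Suc.prems(1) by (intro mult_left_le_one_le) (auto simp: power_le_one)
    then have "(2/3)^n * (3/2 * Re z0) \<le> Re z" using right by linarith
    moreover have "Re z \<le> (3/2)^n * (3/2 * Re z0)" using Suc.prems(4) by (simp add: mult_ac)
    ultimately show ?thesis by (intro via[of "3/2"]) simp_all
  next
    case left
    have "2/3 * Re z0 \<le> (3/2)^n * (2/3 * Re z0)"
      using Suc.prems(1) by (intro mult_le_cancel_right1[THEN iffD2]) (auto simp: one_le_power)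
    then have "Re z \<le> (3/2)^n * (2/3 * Re z0)" using left by linarith
    moreover have "(2/3)^n * (2/3 * Re z0) \<le> Re z" using Suc.prems(3) by (simp add: mult_ac)
    ultimately show ?thesis by (intro via[of "2/3"]) simp_all
  qed
qed

lemma covers_rel_ball_vertical:
  fixes \<phi> :: "complex \<Rightarrow> complex"
  assumes holo: "\<phi> holomorphic_on halfplane" and inj: "inj_on \<phi> halfplane"
    and nz: "0 \<notin> \<phi> ` halfplane"
    and z0: "Re z0 > 0" and re: "Re z = Re z0" and im: "\<bar>Im z - Im z0\<bar> \<le> Re z0"
    and cov: "covers_rel_ball \<phi> z0 \<epsilon>" and \<epsilon>: "\<epsilon> \<ge> 0"
  shows "covers_rel_ball \<phi> z (\<epsilon> / (schottky_const ^ 4)\<^sup>2)"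
proof -
  define m where "m = Complex (Re z0) ((Im z + Im z0) / 2)"
  have "cmod (m - z0) = \<bar>Im z - Im z0\<bar> / 2" by (simp add: m_def cmod_def)
  then have "covers_rel_ball \<phi> m (\<epsilon> / schottky_const ^ 4)"
    using im by (intro covers_rel_ball_step[OF holo inj nz z0 _ cov \<epsilon>]) simp
  moreover have "z - m = Complex 0 ((Im z - Im z0) / 2)" using re by (simp add: m_def complex_eq_iff field_simps)
  then have "cmod (z - m) = \<bar>Im z - Im z0\<bar> / 2" by (simp add: cmod_def)
  ultimately have "covers_rel_ball \<phi> z (\<epsilon> / schottky_const ^ 4 / schottky_const ^ 4)"
    using z0 im \<epsilon> by (intro covers_rel_ball_step[OF holo inj nz, of m z]) (auto simp: m_def)
  then show ?thesis by (simp add: power2_eq_square field_simps)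
qed

text \<open>Chain of \<open>2n + 2\<close> steps along \<open>1 \<rightarrow> \<bar>s\<bar> \<rightarrow> \<bar>s\<bar> + is \<rightarrow> 1 + is\<close>.\<close>
lemma covers_rel_ball_on_line:
  fixes \<phi> :: "complex \<Rightarrow> complex"
  assumes holo: "\<phi> holomorphic_on halfplane" and inj: "inj_on \<phi> halfplane"
    and nz: "0 \<notin> \<phi> ` halfplane"
    and cov: "covers_rel_ball \<phi> 1 \<epsilon>" and \<epsilon>: "\<epsilon> \<ge> 0" and s: "\<bar>s\<bar> \<ge> 1" and n: "\<bar>s\<bar> \<le> (3/2)^n"
  shows "covers_rel_ball \<phi> (Complex 1 s) (\<epsilon> / (schottky_const ^ 4) ^ (2 * n + 2))"
proof -
  let ?K = "schottky_const ^ 4"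
  have K: "?K > 0" using schottky_const_ge_1 by simp
  have "covers_rel_ball \<phi> (Complex \<bar>s\<bar> 0) (\<epsilon> / ?K ^ n)"
    using covers_rel_ball_horizontal[OF holo inj nz, of 1 "Complex \<bar>s\<bar> 0" n] cov \<epsilon> s n
      power_le_one[of "2/3::real" n] by simp
  then have "covers_rel_ball \<phi> (Complex \<bar>s\<bar> s) (\<epsilon> / ?K ^ n / ?K\<^sup>2)"
    using s \<epsilon> K by (intro covers_rel_ball_vertical[OF holo inj nz]) auto
  moreover have "(2/3)^n * \<bar>s\<bar> \<le> 1"
    using mult_left_mono[OF n, of "(2/3)^n"] by (simp add: power_mult_distrib[symmetric])
  ultimately have "covers_rel_ball \<phi> (Complex 1 s) (\<epsilon> / ?K ^ n / ?K\<^sup>2 / ?K ^ n)"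
    using s \<epsilon> K mult_mono[of 1 "(3/2::real)^n" 1 "\<bar>s\<bar>"] one_le_power[of "3/2::real" n]
    by (intro covers_rel_ball_horizontal[OF holo inj nz, of "Complex \<bar>s\<bar> s" "Complex 1 s" n]) auto
  moreover have "?K ^ (2 * n + 2) = ?K ^ n * ?K\<^sup>2 * ?K ^ n"
    unfolding mult_2 power_add by (simp only: mult_ac)
  ultimately show ?thesis by (simp only: divide_divide_eq_left)
qed

lemma exists_three_halves_power_bound:
  fixes a B :: real
  assumes a: "a \<ge> 1" and B: "B \<ge> 1"
  obtains n :: nat where "a \<le> (3/2)^n" "B ^ n \<le> B * a powr (ln B / ln (3/2))"
proof
  define n where "n = nat \<lceil>ln a / ln (3/2)\<rceil>"
  have l: "ln (3/2::real) > 0" by simp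
  have "ln a \<ge> 0" using a by simp
  then have n_ge: "real n \<ge> ln a / ln (3/2)" and n_le: "real n \<le> ln a / ln (3/2) + 1"
    unfolding n_def using l by (linarith, simp add: of_nat_nat)
  have "a = exp (ln a)" using a by simp
  also have "\<dots> \<le> exp (real n * ln (3/2))" using n_ge l by (simp add: field_simps)
  finally show "a \<le> (3/2)^n" by (simp add: exp_of_nat_mult)
  have "B ^ n = exp (real n * ln B)" using B by (simp add: exp_of_nat_mult)
  also have "\<dots> \<le> exp ((ln a / ln (3/2) + 1) * ln B)"
    using n_le B by (intro exp_mono mult_right_mono) auto
  also have "\<dots> = B * a powr (ln B / ln (3/2))"
    using a B by (simp add: powr_def exp_add algebra_simps)
  finally show "B ^ n \<le> B * a powr (ln B / ln (3/2))" .
qed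

lemma covers_rel_ball_on_line_powr:
  fixes \<phi> :: "complex \<Rightarrow> complex"
  assumes holo: "\<phi> holomorphic_on halfplane" and inj: "inj_on \<phi> halfplane"
    and nz: "0 \<notin> \<phi> ` halfplane" and cov: "covers_rel_ball \<phi> 1 \<epsilon>" and \<epsilon>: "\<epsilon> > 0"
  obtains c \<kappa> where "c > 0" "\<kappa> \<ge> 0"
    "\<And>s. \<bar>s\<bar> \<ge> 1 \<Longrightarrow> covers_rel_ball \<phi> (Complex 1 s) (c * \<bar>s\<bar> powr (- \<kappa>))"
proof
  define B where "B = schottky_const ^ 8"
  define \<kappa> where "\<kappa> = ln B / ln (3/2)"
  have B: "B \<ge> 1" using schottky_const_ge_1 by (simp add: B_def)
  show "\<epsilon> / B\<^sup>2 > 0" using \<epsilon> B by simp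
  show "\<kappa> \<ge> 0" using B by (simp add: \<kappa>_def)
  fix s :: real assume s: "\<bar>s\<bar> \<ge> 1"
  obtain n where n: "\<bar>s\<bar> \<le> (3/2)^n" and Bn: "B ^ n \<le> B * \<bar>s\<bar> powr \<kappa>"
    using exists_three_halves_power_bound[OF s B] unfolding \<kappa>_def by blast
  let ?P = "(schottky_const ^ 4) ^ (2 * n + 2)"
  have "?P = B ^ n * B"
    unfolding B_def power_mult[symmetric] power_add[symmetric] by (simp add: algebra_simps)
  also have "\<dots> \<le> B\<^sup>2 * \<bar>s\<bar> powr \<kappa>"
    using mult_right_mono[OF Bn, of B] B by (simp add: power2_eq_square mult_ac)
  finally have P: "?P \<le> B\<^sup>2 * \<bar>s\<bar> powr \<kappa>" .
  have "\<epsilon> / B\<^sup>2 * \<bar>s\<bar> powr (- \<kappa>) = \<epsilon> / (B\<^sup>2 * \<bar>s\<bar> powr \<kappa>)"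
    by (simp add: powr_minus divide_inverse)
  also have "\<dots> \<le> \<epsilon> / ?P"
    using P \<epsilon> B s schottky_const_ge_1 by (intro divide_left_mono) (auto intro!: mult_pos_pos)
  finally show "covers_rel_ball \<phi> (Complex 1 s) (\<epsilon> / B\<^sup>2 * \<bar>s\<bar> powr (- \<kappa>))"
    using covers_rel_ball_on_line[OF holo inj nz cov _ s n] \<epsilon> by (auto intro: covers_rel_ball_mono)
qed

lemma measure_ball_complex:
  "r \<ge> 0 \<Longrightarrow> measure lborel (ball (c::complex) r) = r\<^sup>2 * measure lborel (ball (0::complex) 1)"
  using content_ball_conv_unit_ball[of r c] by simp

lemma fmeasurable_ball_complex: "ball (c::complex) r \<in> fmeasurable lborel"
  unfolding fmeasurable_def using emeasure_lborel_ball_finite[of c r] by (simp add: borel_open)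

lemma sum_power2_radii_le_of_disjoint_balls:
  fixes a :: "'i \<Rightarrow> complex" and r :: "'i \<Rightarrow> real"
  assumes J: "finite J" and r: "\<And>j. j \<in> J \<Longrightarrow> r j \<ge> 0" and R: "R \<ge> 0"
    and sub: "\<And>j. j \<in> J \<Longrightarrow> ball (a j) (r j) \<subseteq> ball 0 R"
    and disj: "pairwise (\<lambda>i j. disjnt (ball (a i) (r i)) (ball (a j) (r j))) J"
  shows "(\<Sum>j\<in>J. (r j)\<^sup>2) \<le> R\<^sup>2"
proof -
  define U where "U = measure lborel (ball (0::complex) 1)"
  have U: "U > 0" unfolding U_def by (rule content_ball_pos) simp
  have "(\<Sum>j\<in>J. (r j)\<^sup>2) * U = (\<Sum>j\<in>J. measure lborel (ball (a j) (r j)))"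
    unfolding sum_distrib_right
  proof (intro sum.cong refl)
    fix j assume "j \<in> J"
    then show "(r j)\<^sup>2 * U = measure lborel (ball (a j) (r j))"
      using measure_ball_complex[of "r j" "a j"] r by (simp add: U_def)
  qed
  also have "\<dots> = measure lborel (\<Union>j\<in>J. ball (a j) (r j))"
    by (rule measure_UNION'[symmetric, OF J fmeasurable_ball_complex disj])
  also have "\<dots> \<le> measure lborel (ball (0::complex) R)"
    using sub by (intro measure_mono_fmeasurable fmeasurable_ball_complex) (auto simp: borel_open open_UN)
  also have "\<dots> = R\<^sup>2 * U" using measure_ball_complex[OF R, of 0] by (simp add: U_def)
  finally show ?thesis using U by simp
qed

text \<open>The images of disjoint discs of radius \<open>\<rho>\<close> contain disjoint discs of radii proportional to
  \<open>\<rho> \<bar>\<phi>'\<bar>\<close> inside \<open>ball 0 (R + 1)\<close>; comparing areas bounds the sum of \<open>\<bar>\<phi>'\<bar>\<^sup>2\<close>.\<close>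
lemma sum_power2_norm_deriv_le:
  fixes \<phi> :: "complex \<Rightarrow> complex" and z :: "'i \<Rightarrow> complex"
  assumes holo: "\<phi> holomorphic_on S" and inj: "inj_on \<phi> S"
    and J: "finite J" and \<rho>: "\<rho> > 0" and R: "R \<ge> 0"
    and sub: "\<And>j. j \<in> J \<Longrightarrow> ball (z j) \<rho> \<subseteq> S"
    and bound: "\<And>j \<zeta>. j \<in> J \<Longrightarrow> \<zeta> \<in> ball (z j) \<rho> \<Longrightarrow> cmod (\<phi> \<zeta>) \<le> R"
    and sep: "\<And>i j. i \<in> J \<Longrightarrow> j \<in> J \<Longrightarrow> i \<noteq> j \<Longrightarrow> cmod (z i - z j) \<ge> 2 * \<rho>"
  shows "(\<Sum>j\<in>J. (cmod (deriv \<phi> (z j)))\<^sup>2) \<le> (2 * (schottky_const\<^sup>2 + 1) * (R + 1) / \<rho>)\<^sup>2"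
proof -
  define c where "c = \<rho> / (2 * (schottky_const\<^sup>2 + 1))"
  have "schottky_const\<^sup>2 + 1 > 0" by (rule add_nonneg_pos) simp_all
  then have c: "c > 0" using \<rho> by (simp add: c_def)
  define r where "r = (\<lambda>j. c * cmod (deriv \<phi> (z j)))"
  have image: "ball (\<phi> (z j)) (r j) \<subseteq> \<phi> ` ball (z j) \<rho>" if "j \<in> J" for j
    using univalent_image_contains_ball[OF holomorphic_on_subset[OF holo sub[OF that]]
        inj_on_subset[OF inj sub[OF that]] \<rho>]
    by (simp add: r_def c_def mult.assoc)
  have "(\<Sum>j\<in>J. (r j)\<^sup>2) \<le> (R + 1)\<^sup>2"
  proof (rule sum_power2_radii_le_of_disjoint_balls[OF J])
    show "0 \<le> r j" for j using c by (simp add: r_def)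
    show "ball (\<phi> (z j)) (r j) \<subseteq> ball 0 (R + 1)" if j: "j \<in> J" for j
    proof
      fix w assume "w \<in> ball (\<phi> (z j)) (r j)"
      then obtain \<zeta> where "\<zeta> \<in> ball (z j) \<rho>" "w = \<phi> \<zeta>" using image[OF j] by blast
      then show "w \<in> ball 0 (R + 1)" using bound[OF j] by fastforce
    qed
    show "pairwise (\<lambda>i j. disjnt (ball (\<phi> (z i)) (r i)) (ball (\<phi> (z j)) (r j))) J"
      unfolding pairwise_def disjnt_def
    proof (intro ballI impI equals0I)
      fix i j w assume i: "i \<in> J" and j: "j \<in> J" and ij: "i \<noteq> j"
        and w: "w \<in> ball (\<phi> (z i)) (r i) \<inter> ball (\<phi> (z j)) (r j)"
      obtain \<zeta>1 where \<zeta>1: "\<zeta>1 \<in> ball (z i) \<rho>" "w = \<phi> \<zeta>1" using image[OF i] w by blast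
      obtain \<zeta>2 where \<zeta>2: "\<zeta>2 \<in> ball (z j) \<rho>" "w = \<phi> \<zeta>2" using image[OF j] w by blast
      have "\<zeta>1 = \<zeta>2" using inj \<zeta>1 \<zeta>2 sub[OF i] sub[OF j] by (metis inj_onD subsetD)
      then have "dist (z i) (z j) < 2 * \<rho>"
        using \<zeta>1 \<zeta>2 dist_triangle_less_add[of "z i" \<zeta>1 \<rho> "z j" \<rho>] by (simp add: dist_commute)
      then show False using sep[OF i j ij] by (simp add: dist_norm)
    qed
  qed (use R in simp)
  then have "c\<^sup>2 * (\<Sum>j\<in>J. (cmod (deriv \<phi> (z j)))\<^sup>2) \<le> (R + 1)\<^sup>2"
    by (simp add: r_def power_mult_distrib sum_distrib_left)
  then have "(\<Sum>j\<in>J. (cmod (deriv \<phi> (z j)))\<^sup>2) \<le> ((R + 1) / c)\<^sup>2"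
    using c by (simp add: power_divide le_divide_eq mult.commute)
  also have "(R + 1) / c = 2 * (schottky_const\<^sup>2 + 1) * (R + 1) / \<rho>" by (simp add: c_def)
  finally show ?thesis .
qed

lemma integral_le_sum_cell_maxima:
  fixes h :: "real \<Rightarrow> real" and N :: nat
  assumes cont: "continuous_on {1..2} h" and N: "N > 0"
  obtains y where "\<And>j. j < N \<Longrightarrow> y j \<in> {1 + real j / N .. 1 + real (Suc j) / N}"
    "integral {1..2} h \<le> (\<Sum>j<N. h (y j)) / N"
proof -
  define P where "P = (\<lambda>j::nat. {1 + real j / N .. 1 + real (Suc j) / N})"
  have P_sub: "P j \<subseteq> {1..2}" if "j < N" for j
    using that N by (auto simp: P_def divide_le_eq)
  have "\<exists>y. j < N \<longrightarrow> y \<in> P j \<and> (\<forall>x\<in>P j. h x \<le> h y)" for j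
  proof (cases "j < N")
    case True
    have "P j \<noteq> {}" using N by (auto simp: P_def divide_right_mono)
    then show ?thesis
      using continuous_attains_sup[OF _ _ continuous_on_subset[OF cont P_sub[OF True]]]
      by (auto simp: P_def)
  qed auto
  then obtain y where y: "\<And>j. j < N \<Longrightarrow> y j \<in> P j \<and> (\<forall>x\<in>P j. h x \<le> h (y j))" by metis
  have cell: "integral (P j) h \<le> h (y j) / N" if "j < N" for j
  proof -
    have "integral (P j) h \<le> integral (P j) (\<lambda>_. h (y j))"
      using y[OF that] continuous_on_subset[OF cont P_sub[OF that]]
      by (intro integral_le) (auto simp: P_def intro: integrable_continuous_real)
    also have "\<dots> = h (y j) / N" using N by (simp add: P_def field_simps)
    finally show ?thesis .
  qed
  have additive: "integral {1 .. 1 + real k / N} h = (\<Sum>j<k. integral (P j) h)" if "k \<le> N" for k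
    using that
  proof (induction k)
    case (Suc k)
    have "{1 .. 1 + real (Suc k) / N} \<subseteq> {1..2}" using Suc.prems N by (auto simp: divide_le_eq)
    then have "integral {1 .. 1 + real (Suc k) / N} h = integral {1 .. 1 + real k / N} h + integral (P k) h"
      unfolding P_def using N integrable_continuous_real[OF continuous_on_subset[OF cont]]
      by (intro Henstock_Kurzweil_Integration.integral_combine[symmetric]) (auto simp: divide_right_mono)
    then show ?case using Suc by simp
  qed simp
  have "integral {1..2} h = (\<Sum>j<N. integral (P j) h)" using additive[of N] N by simp
  also have "\<dots> \<le> (\<Sum>j<N. h (y j)) / N" unfolding sum_divide_distrib by (intro sum_mono cell) simp
  finally show ?thesis using that y unfolding P_def by blast
qed

lemma sum_lessThan_le_by_parity:
  fixes f :: "nat \<Rightarrow> real"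
  assumes "\<And>J. J \<subseteq> {..<N} \<Longrightarrow> (\<And>i j. i \<in> J \<Longrightarrow> j \<in> J \<Longrightarrow> i < j \<Longrightarrow> i + 2 \<le> j) \<Longrightarrow> sum f J \<le> C"
  shows "sum f {..<N} \<le> 2 * C"
proof -
  have "{..<N} = {j. j < N \<and> even j} \<union> {j. j < N \<and> odd j}" by auto
  then have "sum f {..<N} = sum f {j. j < N \<and> even j} + sum f {j. j < N \<and> odd j}"
    by (simp only:) (rule sum.union_disjoint; auto)
  also have "\<dots> \<le> C + C" by (intro add_mono assms) (auto, presburger+)
  finally show ?thesis by simp
qed

lemma continuous_on_deriv_vertical_line:
  fixes \<phi> :: "complex \<Rightarrow> complex"
  assumes holo: "\<phi> holomorphic_on halfplane"
  shows "continuous_on S (\<lambda>y. deriv \<phi> (Complex 1 (c * y)))"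
  by (rule continuous_on_compose2[OF holomorphic_on_imp_continuous_on[OF
        holomorphic_deriv[OF holo open_halfplane]]])
    (auto simp: halfplane_def intro!: continuous_intros)

lemma near_point_in_strip:
  assumes "cmod (\<zeta> - Complex 1 s) < 1/4" "T \<le> \<bar>s\<bar>" "\<bar>s\<bar> \<le> 2 * T"
  shows "0 < Re \<zeta>" "Re \<zeta> < 2" "T - 1 \<le> \<bar>Im \<zeta>\<bar>" "\<bar>Im \<zeta>\<bar> \<le> 2 * T + 1"
proof -
  have "\<bar>Re \<zeta> - 1\<bar> < 1/4" "\<bar>Im \<zeta> - s\<bar> < 1/4"
    using assms(1) abs_Re_le_cmod[of "\<zeta> - Complex 1 s"] abs_Im_le_cmod[of "\<zeta> - Complex 1 s"] by auto
  then show "0 < Re \<zeta>" "Re \<zeta> < 2" "T - 1 \<le> \<bar>Im \<zeta>\<bar>" "\<bar>Im \<zeta>\<bar> \<le> 2 * T + 1"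
    using assms(2,3) by linarith+
qed

lemma sum_power2_norm_deriv_vertical_le:
  fixes \<phi> :: "complex \<Rightarrow> complex" and s :: "'i \<Rightarrow> real"
  assumes holo: "\<phi> holomorphic_on halfplane" and inj: "inj_on \<phi> halfplane"
    and J: "finite J" and R: "R \<ge> 0"
    and height: "\<And>j. j \<in> J \<Longrightarrow> T \<le> \<bar>s j\<bar> \<and> \<bar>s j\<bar> \<le> 2 * T"
    and sep: "\<And>i j. i \<in> J \<Longrightarrow> j \<in> J \<Longrightarrow> i \<noteq> j \<Longrightarrow> 1/2 \<le> \<bar>s i - s j\<bar>"
    and bound: "\<And>\<zeta>. 0 < Re \<zeta> \<Longrightarrow> Re \<zeta> < 2 \<Longrightarrow> T - 1 \<le> \<bar>Im \<zeta>\<bar> \<Longrightarrow> \<bar>Im \<zeta>\<bar> \<le> 2 * T + 1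
       \<Longrightarrow> cmod (\<phi> \<zeta>) \<le> R"
  shows "(\<Sum>j\<in>J. (cmod (deriv \<phi> (Complex 1 (s j))))\<^sup>2) \<le> (8 * (schottky_const\<^sup>2 + 1) * (R + 1))\<^sup>2"
proof -
  have "(\<Sum>j\<in>J. (cmod (deriv \<phi> (Complex 1 (s j))))\<^sup>2) \<le> (2 * (schottky_const\<^sup>2 + 1) * (R + 1) / (1/4))\<^sup>2"
  proof (rule sum_power2_norm_deriv_le[OF holo inj J _ R])
    show "ball (Complex 1 (s j)) (1/4) \<subseteq> halfplane" for j
      using ball_Re_subset_halfplane[of "Complex 1 (s j)"] by auto
    show "cmod (\<phi> \<zeta>) \<le> R" if "j \<in> J" "\<zeta> \<in> ball (Complex 1 (s j)) (1/4)" for j \<zeta>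
      using that height[of j]
      by (intro bound near_point_in_strip) (auto simp: dist_norm norm_minus_commute)
    show "2 * (1/4) \<le> cmod (Complex 1 (s i) - Complex 1 (s j))" if "i \<in> J" "j \<in> J" "i \<noteq> j" for i j
      using sep[OF that] abs_Im_le_cmod[of "Complex 1 (s i) - Complex 1 (s j)"] by simp
  qed simp_all
  moreover have "2 * (schottky_const\<^sup>2 + 1) * (R + 1) / (1/4) = 8 * (schottky_const\<^sup>2 + 1) * (R + 1)"
    by simp
  ultimately show ?thesis by (simp only:)
qed

text \<open>Discretise the segment into \<open>N = \<lceil>T\<rceil>\<close> cells and bound \<open>\<bar>\<phi>'\<bar>\<^sup>2\<close> by its values at cell maxima;
  maxima in cells of equal parity are \<open>1/2\<close>-separated.\<close>
lemma integral_power2_norm_deriv_segment_le: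
  fixes \<phi> :: "complex \<Rightarrow> complex"
  assumes holo: "\<phi> holomorphic_on halfplane" and inj: "inj_on \<phi> halfplane"
    and T: "T \<ge> 1" and \<sigma>: "\<bar>\<sigma>\<bar> = 1" and R: "R \<ge> 0"
    and bound: "\<And>\<zeta>. 0 < Re \<zeta> \<Longrightarrow> Re \<zeta> < 2 \<Longrightarrow> T - 1 \<le> \<bar>Im \<zeta>\<bar> \<Longrightarrow> \<bar>Im \<zeta>\<bar> \<le> 2 * T + 1
       \<Longrightarrow> cmod (\<phi> \<zeta>) \<le> R"
  shows "integral {1..2} (\<lambda>y. (cmod (deriv \<phi> (Complex 1 (\<sigma> * T * y))))\<^sup>2)
           \<le> 2 * (8 * (schottky_const\<^sup>2 + 1) * (R + 1))\<^sup>2 / T"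
proof -
  define C where "C = (8 * (schottky_const\<^sup>2 + 1) * (R + 1))\<^sup>2"
  define h where "h = (\<lambda>y. (cmod (deriv \<phi> (Complex 1 (\<sigma> * T * y))))\<^sup>2)"
  have cont: "continuous_on {1..2} h" unfolding h_def
    by (intro continuous_intros continuous_on_deriv_vertical_line[OF holo])
  define N where "N = nat \<lceil>T\<rceil>"
  have N: "T \<le> real N" "real N \<le> T + 1" "N > 0" using T by (auto simp: N_def)
  obtain y where y: "\<And>j. j < N \<Longrightarrow> y j \<in> {1 + real j / N .. 1 + real (Suc j) / N}"
    and int: "integral {1..2} h \<le> (\<Sum>j<N. h (y j)) / N"
    using integral_le_sum_cell_maxima[OF cont N(3)] by metis
  have y12: "1 \<le> y j" "y j \<le> 2" if "j < N" for j
  proof -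
    have "real j / N \<ge> 0" "real (Suc j) / N \<le> 1" using that N(3) by (auto simp: divide_le_eq)
    moreover have "1 + real j / N \<le> y j" "y j \<le> 1 + real (Suc j) / N" using y[OF that] by auto
    ultimately show "1 \<le> y j" "y j \<le> 2" by linarith+
  qed
  have parity_class: "(\<Sum>j\<in>J. h (y j)) \<le> C"
    if J: "J \<subseteq> {..<N}" and gap: "\<And>i j. i \<in> J \<Longrightarrow> j \<in> J \<Longrightarrow> i < j \<Longrightarrow> i + 2 \<le> j" for J
    unfolding h_def C_def
  proof (rule sum_power2_norm_deriv_vertical_le[OF holo inj finite_subset[OF J] R _ _ bound])
    show "T \<le> \<bar>\<sigma> * T * y j\<bar> \<and> \<bar>\<sigma> * T * y j\<bar> \<le> 2 * T" if "j \<in> J" for j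
      using \<sigma> T y12[of j] J that by (auto simp: abs_mult)
    have sep: "1/N \<le> y j - y i" if "i \<in> J" "j \<in> J" "i < j" for i j
    proof -
      have "real (Suc i) / N + 1 / N \<le> real j / N"
        using gap[OF that] N(3) by (simp add: divide_right_mono add_divide_distrib[symmetric])
      then show ?thesis using y[of i] y[of j] that J by auto
    qed
    show "1/2 \<le> \<bar>\<sigma> * T * y i - \<sigma> * T * y j\<bar>" if "i \<in> J" "j \<in> J" "i \<noteq> j" for i j
    proof -
      have "1/N \<le> \<bar>y i - y j\<bar>" using sep[of i j] sep[of j i] that by (cases "i < j") auto
      then have "T * (1/N) \<le> T * \<bar>y i - y j\<bar>" using T by (intro mult_left_mono) auto
      moreover have "1/2 \<le> T * (1/N)" using N T by (simp add: field_simps)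
      moreover have "\<bar>\<sigma> * T * y i - \<sigma> * T * y j\<bar> = T * \<bar>y i - y j\<bar>"
        using \<sigma> T by (simp add: abs_mult right_diff_distrib[symmetric])
      ultimately show ?thesis by linarith
    qed
  qed simp
  have "(\<Sum>j<N. h (y j)) \<le> 2 * C" by (rule sum_lessThan_le_by_parity[OF parity_class])
  then have "(\<Sum>j<N. h (y j)) / N \<le> 2 * C / N" using N(3) by (simp add: divide_right_mono)
  with int have "integral {1..2} h \<le> 2 * C / N" by linarith
  also have "\<dots> \<le> 2 * C / T" using N T by (intro divide_left_mono) (auto simp: C_def)
  finally show ?thesis by (simp add: h_def C_def)
qed

lemma
  fixes f :: "real \<Rightarrow> real"
  assumes "continuous_on Iset f"
  shows integrable_on_Iset: "f integrable_on Iset"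
    and integral_Iset: "integral Iset f = integral {-2..-1} f + integral {1..2} f"
proof -
  have "f integrable_on {-2..-1}" "f integrable_on {1..2}"
    using assms by (auto simp: Iset_def intro: integrable_continuous_real continuous_on_subset)
  moreover have "negligible ({-2..-1} \<inter> {1..2::real})" by simp
  ultimately show "f integrable_on Iset" "integral Iset f = integral {-2..-1} f + integral {1..2} f"
    unfolding Iset_def by (simp_all add: integrable_Un integral_Un)
qed

lemma integral_Iset_bounds:
  fixes f :: "real \<Rightarrow> real"
  assumes cont: "continuous_on Iset f" and bounds: "\<And>y. y \<in> Iset \<Longrightarrow> a \<le> f y \<and> f y \<le> b"
  shows "2 * a \<le> integral Iset f" "integral Iset f \<le> 2 * b"
proof -
  have int: "f integrable_on {-2..-1}" "f integrable_on {1..2}"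
    using cont by (auto simp: Iset_def intro: integrable_continuous_real continuous_on_subset)
  have "integral {-2..-1::real} (\<lambda>_. a) \<le> integral {-2..-1} f"
    by (rule integral_le) (use int bounds in \<open>auto simp: Iset_def\<close>)
  moreover have "integral {1..2::real} (\<lambda>_. a) \<le> integral {1..2} f"
    by (rule integral_le) (use int bounds in \<open>auto simp: Iset_def\<close>)
  moreover have "integral {-2..-1} f \<le> integral {-2..-1::real} (\<lambda>_. b)"
    by (rule integral_le) (use int bounds in \<open>auto simp: Iset_def\<close>)
  moreover have "integral {1..2} f \<le> integral {1..2::real} (\<lambda>_. b)"
    by (rule integral_le) (use int bounds in \<open>auto simp: Iset_def\<close>)
  ultimately show "2 * a \<le> integral Iset f" "integral Iset f \<le> 2 * b"
    using integral_Iset[OF cont] by simp_all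
qed

lemma integral_Iset_powr_bounds:
  fixes f :: "real \<Rightarrow> real"
  assumes cont: "continuous_on Iset f" and pos: "\<And>y. y \<in> Iset \<Longrightarrow> f y > 0"
    and ln_bound: "\<And>y. y \<in> Iset \<Longrightarrow> \<bar>ln (f y)\<bar> \<le> \<Lambda>"
  shows "2 * exp (- (\<bar>t\<bar> * \<Lambda>)) \<le> integral Iset (\<lambda>y. f y powr t)"
    and "integral Iset (\<lambda>y. f y powr t) \<le> 2 * exp (\<bar>t\<bar> * \<Lambda>)"
proof -
  have cont_powr: "continuous_on Iset (\<lambda>y. f y powr t)"
    using pos by (intro continuous_on_powr[OF cont continuous_on_const]) force
  have "exp (- (\<bar>t\<bar> * \<Lambda>)) \<le> f y powr t \<and> f y powr t \<le> exp (\<bar>t\<bar> * \<Lambda>)" if "y \<in> Iset" for y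
  proof -
    have "\<bar>t * ln (f y)\<bar> \<le> \<bar>t\<bar> * \<Lambda>" using ln_bound[OF that] by (simp add: abs_mult mult_left_mono)
    then show ?thesis using pos[OF that] by (simp add: powr_def abs_le_iff)
  qed
  then show "2 * exp (- (\<bar>t\<bar> * \<Lambda>)) \<le> integral Iset (\<lambda>y. f y powr t)"
    and "integral Iset (\<lambda>y. f y powr t) \<le> 2 * exp (\<bar>t\<bar> * \<Lambda>)"
    by (rule integral_Iset_bounds[OF cont_powr], blast)+
qed

text \<open>Hoelder's inequality in the form \<open>\<integral>f\<^bsup>ua+vb\<^esup> \<le> (\<integral>f\<^sup>a)\<^sup>u (\<integral>f\<^sup>b)\<^sup>v\<close>, obtained by integrating
  Young's inequality for the normalised functions \<open>f\<^sup>a/\<integral>f\<^sup>a\<close> and \<open>f\<^sup>b/\<integral>f\<^sup>b\<close>.\<close>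
lemma convex_on_ln_integral_powr:
  fixes f :: "real \<Rightarrow> real"
  assumes pos: "\<And>y. y \<in> S \<Longrightarrow> f y > 0"
    and int: "\<And>t. (\<lambda>y. f y powr t) integrable_on S"
    and int_pos: "\<And>t. integral S (\<lambda>y. f y powr t) > 0"
  shows "convex_on UNIV (\<lambda>t. ln (integral S (\<lambda>y. f y powr t)))"
proof (rule convex_onI)
  fix v a b :: real assume v: "0 < v" "v < 1"
  define u where "u = 1 - v"
  have u: "u > 0" "u + v = 1" using v by (auto simp: u_def)
  define A where "A = integral S (\<lambda>y. f y powr a)"
  define B where "B = integral S (\<lambda>y. f y powr b)"
  have A: "A > 0" and B: "B > 0" using int_pos by (simp_all add: A_def B_def)
  have young: "f y powr (u * a + v * b) \<le> A powr u * B powr v * (u * (f y powr a / A) + v * (f y powr b / B))"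
    if "y \<in> S" for y
  proof -
    have "f y powr (u * a + v * b) = A powr u * B powr v * ((f y powr a / A) powr u * (f y powr b / B) powr v)"
      using A B pos[OF that] by (simp add: powr_powr powr_add powr_divide mult.commute)
    also have "\<dots> \<le> A powr u * B powr v * (u * (f y powr a / A) + v * (f y powr b / B))"
      using A B pos[OF that] u v by (intro mult_left_mono Youngs_inequality_0) auto
    finally show ?thesis .
  qed
  have int_a: "(\<lambda>y. u * (f y powr a / A)) integrable_on S"
    and int_b: "(\<lambda>y. v * (f y powr b / B)) integrable_on S"
    using int by (auto intro!: integrable_on_mult_right integrable_on_divide)
  have "integral S (\<lambda>y. f y powr (u * a + v * b))
        \<le> integral S (\<lambda>y. A powr u * B powr v * (u * (f y powr a / A) + v * (f y powr b / B)))"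
    by (rule integral_le[OF int integrable_on_mult_right[OF integrable_add[OF int_a int_b]] young])
  also have "\<dots> = A powr u * B powr v * (u * (A / A) + v * (B / B))"
    using int_a int_b by (simp add: integral_add A_def B_def)
  also have "\<dots> = A powr u * B powr v" using A B u by simp
  finally have "ln (integral S (\<lambda>y. f y powr (u * a + v * b))) \<le> ln (A powr u * B powr v)"
    using int_pos A B by simp
  also have "\<dots> = u * ln A + v * ln B" using A B by (simp add: ln_mult ln_powr)
  finally show "ln (integral S (\<lambda>y. f y powr ((1 - v) *\<^sub>R a + v *\<^sub>R b)))
      \<le> (1 - v) * ln (integral S (\<lambda>y. f y powr a)) + v * ln (integral S (\<lambda>y. f y powr b))"
    by (simp add: u_def A_def B_def)
qed simp

lemma integral_Iset_power2_norm_deriv_le: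
  fixes \<phi> :: "complex \<Rightarrow> complex"
  assumes holo: "\<phi> holomorphic_on halfplane" and inj: "inj_on \<phi> halfplane"
    and T: "T \<ge> 1" and R: "R \<ge> 0"
    and bound: "\<And>\<zeta>. 0 < Re \<zeta> \<Longrightarrow> Re \<zeta> < 2 \<Longrightarrow> T - 1 \<le> \<bar>Im \<zeta>\<bar> \<Longrightarrow> \<bar>Im \<zeta>\<bar> \<le> 2 * T + 1
       \<Longrightarrow> cmod (\<phi> \<zeta>) \<le> R"
  shows "integral Iset (\<lambda>y. (cmod (deriv \<phi> (Complex 1 (T * y))))\<^sup>2)
           \<le> 4 * (8 * (schottky_const\<^sup>2 + 1) * (R + 1))\<^sup>2 / T"
proof -
  define h where "h = (\<lambda>y. (cmod (deriv \<phi> (Complex 1 (T * y))))\<^sup>2)"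
  define Q where "Q = 2 * (8 * (schottky_const\<^sup>2 + 1) * (R + 1))\<^sup>2 / T"
  note segment = integral_power2_norm_deriv_segment_le[OF holo inj T _ R bound]
  have "integral {1..2} h \<le> Q" using segment[of 1] by (simp add: h_def Q_def)
  moreover have "integral {-2..-1} h = integral {1..2} (\<lambda>y. h (- y))"
    using Henstock_Kurzweil_Integration.integral_reflect_real[of 2 1 "\<lambda>y. h (- y)"] by simp
  moreover have "integral {1..2} (\<lambda>y. h (- y)) \<le> Q" using segment[of "-1"] by (simp add: h_def Q_def)
  moreover have "continuous_on Iset h"
    unfolding h_def by (intro continuous_intros continuous_on_deriv_vertical_line[OF holo])
  ultimately have "integral Iset h \<le> 2 * Q" using integral_Iset[of h] by linarith
  then show ?thesis by (simp add: h_def Q_def)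
qed

lemma norm_deriv_phiT:
  fixes \<phi> :: "complex \<Rightarrow> complex"
  assumes holo: "\<phi> holomorphic_on halfplane" and T: "T > 0"
  shows "cmod (deriv (phiT \<phi> T) (Complex (1/T) y))
           = T * cmod (deriv \<phi> (Complex 1 (T * y))) / cmod (\<phi> (of_real T))"
proof -
  define w where "w = Complex 1 (T * y)"
  have w: "of_real T * Complex (1/T) y = w" using T by (simp add: w_def complex_eq_iff)
  have "(\<phi> has_field_derivative deriv \<phi> w) (at w)"
    by (rule holomorphic_derivI[OF holo open_halfplane]) (simp add: w_def halfplane_def)
  then have "((\<lambda>\<xi>. \<phi> (of_real T * \<xi>)) has_field_derivative deriv \<phi> w * of_real T) (at (Complex (1/T) y))"
    using DERIV_chain2[of \<phi> "deriv \<phi> w" "\<lambda>\<xi>. of_real T * \<xi>"] w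
    by (auto intro!: derivative_eq_intros)
  then have "deriv (phiT \<phi> T) (Complex (1/T) y) = deriv \<phi> w * of_real T / of_real (cmod (\<phi> (of_real T)))"
    unfolding phiT_def by (intro DERIV_imp_deriv DERIV_cdivide)
  then show ?thesis using T by (simp add: w_def norm_mult norm_divide)
qed

lemma beta_phiT:
  "T > 0 \<Longrightarrow> beta (phiT \<phi> T) (1/T) t
     = ln (integral Iset (\<lambda>y. cmod (deriv (phiT \<phi> T) (Complex (1/T) y)) powr t)) / ln T"
  by (simp add: beta_def)

lemma abs_ln_le_of_powr_bounds:
  fixes x T :: real
  assumes T: "exp 1 \<le> T" and a: "a > 0" and b: "b > 0" and \<kappa>: "\<kappa> \<ge> 0"
    and lower: "a * T powr (- \<kappa>) \<le> x" and upper: "x \<le> b * T"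
  shows "x > 0" and "\<bar>ln x\<bar> \<le> (\<kappa> + 1 + \<bar>ln a\<bar> + \<bar>ln b\<bar>) * ln T"
proof -
  have T0: "T > 0" using T exp_gt_zero[of 1] by linarith
  have lnT: "ln T \<ge> 1" using T T0 by (metis exp_le_cancel_iff exp_ln)
  show x: "x > 0" using lower a T0 by (smt (verit) powr_gt_zero mult_pos_pos)
  have "ln x \<le> ln b + ln T" using upper x b T0 by (simp add: ln_mult flip: ln_le_cancel_iff)
  moreover have "ln a - \<kappa> * ln T \<le> ln x" using lower x a T0 by (simp add: ln_mult ln_powr flip: ln_le_cancel_iff)
  moreover have "\<bar>ln a\<bar> \<le> \<bar>ln a\<bar> * ln T" "\<bar>ln b\<bar> \<le> \<bar>ln b\<bar> * ln T"
    using lnT by (simp_all add: mult_le_cancel_left1)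
  moreover have "\<kappa> * ln T \<ge> 0" "\<bar>ln a\<bar> * ln T \<ge> 0" "\<bar>ln b\<bar> * ln T \<ge> 0" using \<kappa> lnT by simp_all
  ultimately show "\<bar>ln x\<bar> \<le> (\<kappa> + 1 + \<bar>ln a\<bar> + \<bar>ln b\<bar>) * ln T"
    using lnT abs_ge_self[of "ln b"] abs_ge_minus_self[of "ln a"]
    unfolding distrib_right by (intro abs_leI) linarith+
qed

lemma Limsup_ereal_finite:
  fixes f :: "'a \<Rightarrow> real"
  assumes F: "F \<noteq> bot" and bounded: "eventually (\<lambda>x. \<bar>f x\<bar> \<le> B) F"
  shows "\<bar>Limsup F (\<lambda>x. ereal (f x))\<bar> \<noteq> \<infinity>"
proof -
  have "Limsup F (\<lambda>x. ereal (f x)) \<le> ereal B"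
    by (rule Limsup_bounded) (use bounded in \<open>eventually_elim, simp add: abs_le_iff\<close>)
  moreover have "ereal (- B) \<le> Limsup F (\<lambda>x. ereal (f x))"
    by (rule le_Limsup[OF F]) (use bounded in \<open>eventually_elim, simp add: abs_le_iff\<close>)
  ultimately show ?thesis by auto
qed

lemma convex_on_Limsup_ereal:
  fixes g :: "'a \<Rightarrow> real \<Rightarrow> real"
  assumes F: "F \<noteq> bot" and convex: "eventually (\<lambda>x. convex_on UNIV (g x)) F"
    and bounded: "\<And>t. \<exists>B. eventually (\<lambda>x. \<bar>g x t\<bar> \<le> B) F"
  shows "convex_on UNIV (\<lambda>t. real_of_ereal (Limsup F (\<lambda>x. ereal (g x t))))"
proof (rule convex_onI)
  define L where "L = (\<lambda>t. real_of_ereal (Limsup F (\<lambda>x. ereal (g x t))))"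
  have L: "Limsup F (\<lambda>x. ereal (g x t)) = ereal (L t)" for t
    using bounded[of t] Limsup_ereal_finite[OF F] by (force simp: L_def ereal_real')
  fix \<theta> x y :: real assume \<theta>: "0 < \<theta>" "\<theta> < 1"
  define m where "m = (1 - \<theta>) * L x + \<theta> * L y"
  have "Limsup F (\<lambda>n. ereal (g n ((1 - \<theta>) * x + \<theta> * y))) \<le> ereal m"
    unfolding Limsup_le_iff
  proof (intro allI impI)
    fix z assume "ereal m < z"
    then obtain r where r: "ereal m < ereal r" "ereal r < z" using ereal_dense2 by blast
    define \<delta> where "\<delta> = r - m"
    have \<delta>: "\<delta> > 0" using r by (simp add: \<delta>_def)
    have "eventually (\<lambda>n. ereal (g n x) < ereal (L x + \<delta>)) F"
      "eventually (\<lambda>n. ereal (g n y) < ereal (L y + \<delta>)) F"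
      using \<delta> by (intro Limsup_lessD; simp add: L)+
    with convex show "eventually (\<lambda>n. z > ereal (g n ((1 - \<theta>) * x + \<theta> * y))) F"
    proof eventually_elim
      case (elim n)
      have "g n ((1 - \<theta>) * x + \<theta> * y) \<le> (1 - \<theta>) * g n x + \<theta> * g n y"
        using convex_onD[OF elim(1), of \<theta> x y] \<theta> by simp
      also have "\<dots> \<le> (1 - \<theta>) * (L x + \<delta>) + \<theta> * (L y + \<delta>)"
        using elim(2,3) \<theta> by (intro add_mono mult_left_mono) auto
      also have "\<dots> = r" by (simp add: m_def \<delta>_def algebra_simps)
      finally have "ereal (g n ((1 - \<theta>) * x + \<theta> * y)) \<le> ereal r" by simp
      then show ?case using r(2) by (rule le_less_trans)
    qed
  qed
  then show "L ((1 - \<theta>) *\<^sub>R x + \<theta> *\<^sub>R y) \<le> (1 - \<theta>) * L x + \<theta> * L y"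
    by (simp add: L m_def)
qed simp

lemma tendsto_const_div_ln: "((\<lambda>T. c / ln T) \<longlongrightarrow> (0::real)) at_top"
  by (rule tendsto_divide_0[OF tendsto_const filterlim_at_top_imp_at_infinity[OF ln_at_top]])

locale doubling_conformal_map =
  fixes \<phi> :: "complex \<Rightarrow> complex" and M T0 :: real
  assumes holo: "\<phi> holomorphic_on halfplane"
    and inj: "inj_on \<phi> halfplane"
    and norm_ge_1: "\<And>\<xi>. \<xi> \<in> halfplane \<Longrightarrow> cmod (\<phi> \<xi>) \<ge> 1"
    and open_image: "open (\<phi> ` halfplane)"
    and doubling: "\<And>T \<xi> \<xi>'. T \<ge> T0 \<Longrightarrow> \<xi> \<in> QT T - QT (T/8) \<Longrightarrow> \<xi>' \<in> QT T - QT (T/8)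
        \<Longrightarrow> cmod (\<phi> \<xi>) \<le> M * cmod (\<phi> \<xi>')"
begin

abbreviation norm_dphiT :: "real \<Rightarrow> real \<Rightarrow> real" where
  "norm_dphiT T y \<equiv> cmod (deriv (phiT \<phi> T) (Complex (1/T) y))"

lemma zero_notin_image: "0 \<notin> \<phi> ` halfplane"
  using norm_ge_1 by fastforce

lemma real_in_annulus: "T > 0 \<Longrightarrow> of_real T \<in> QT T - QT (T/8)"
  by (simp add: QT_def)

lemma M_ge_1: "M \<ge> 1"
proof -
  define T where "T = max T0 1"
  have T: "T \<ge> T0" "T > 0" by (auto simp: T_def)
  have "cmod (\<phi> (of_real T)) \<le> M * cmod (\<phi> (of_real T))"
    using doubling[OF T(1) real_in_annulus[OF T(2)] real_in_annulus[OF T(2)]] .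
  moreover have "cmod (\<phi> (of_real T)) \<ge> 1" by (intro norm_ge_1) (simp add: T_def halfplane_def)
  ultimately show ?thesis by (smt (verit) mult_le_cancel_right1)
qed

lemma covers_rel_ball_at_1: obtains \<epsilon> where "\<epsilon> > 0" "covers_rel_ball \<phi> 1 \<epsilon>"
proof -
  have "\<phi> 1 \<in> \<phi> ` halfplane" by (simp add: halfplane_def)
  then obtain r where r: "r > 0" "ball (\<phi> 1) r \<subseteq> \<phi> ` halfplane"
    using open_image open_contains_ball by blast
  have "cmod (\<phi> 1) \<ge> 1" by (intro norm_ge_1) (simp add: halfplane_def)
  then show ?thesis using r by (intro that[of "r / cmod (\<phi> 1)"]) (auto simp: covers_rel_ball_def intro!: divide_pos_pos)
qed

lemma norm_phi_on_line_comparable: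
  assumes T: "T \<ge> max T0 1" and s: "T \<le> \<bar>s\<bar>" "\<bar>s\<bar> \<le> 2 * T"
  shows "cmod (\<phi> (of_real T)) \<le> M * cmod (\<phi> (Complex 1 s))"
    and "cmod (\<phi> (Complex 1 s)) \<le> M * cmod (\<phi> (of_real T))"
proof -
  have "Complex 1 s \<in> QT T - QT (T/8)" using T s by (simp add: QT_def)
  moreover have "of_real T \<in> QT T - QT (T/8)" using T by (intro real_in_annulus) simp
  ultimately show "cmod (\<phi> (of_real T)) \<le> M * cmod (\<phi> (Complex 1 s))"
    and "cmod (\<phi> (Complex 1 s)) \<le> M * cmod (\<phi> (of_real T))"
    using T by (auto intro: doubling)
qed

text \<open>On the segment \<open>1/T + iI\<close>, \<open>\<bar>\<phi>\<^sub>T'\<bar>\<close> is polynomially bounded in \<open>T\<close>: \<open>\<bar>\<phi>'(1 + iTy)\<bar>\<close> is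
  comparable to \<open>\<bar>\<phi>(1 + iTy)\<bar>\<close> up to the factor \<open>T\<^sup>\<kappa>\<close> from \<open>covers_rel_ball_on_line_powr\<close>, and
  \<open>\<bar>\<phi>(1 + iTy)\<bar>\<close> is comparable to the normalising factor \<open>\<bar>\<phi>(T)\<bar>\<close>.\<close>
lemma norm_deriv_phiT_powr_bounds:
  obtains a b \<kappa> where "a > 0" "b > 0" "\<kappa> \<ge> 0"
    "\<And>T y. T \<ge> max T0 1 \<Longrightarrow> y \<in> Iset \<Longrightarrow> a * T powr (- \<kappa>) \<le> norm_dphiT T y \<and> norm_dphiT T y \<le> b * T"
proof -
  obtain \<epsilon> where \<epsilon>: "\<epsilon> > 0" "covers_rel_ball \<phi> 1 \<epsilon>" by (rule covers_rel_ball_at_1)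
  obtain c \<kappa> where c: "c > 0" and \<kappa>: "\<kappa> \<ge> 0"
    and cov: "\<And>s. \<bar>s\<bar> \<ge> 1 \<Longrightarrow> covers_rel_ball \<phi> (Complex 1 s) (c * \<bar>s\<bar> powr (- \<kappa>))"
    using covers_rel_ball_on_line_powr[OF holo inj zero_notin_image \<epsilon>(2,1)] by metis
  have M: "M \<ge> 1" by (rule M_ge_1)
  show ?thesis
  proof
    show "c * 2 powr (- \<kappa>) / (4 * M) > 0" using c M by simp
    show "2 * schottky_const\<^sup>2 * M > 0" using M schottky_const_ge_1 by simp
    fix T y assume T: "T \<ge> max T0 1" and y: "y \<in> Iset"
    define s where "s = T * y"
    define \<Phi> where "\<Phi> = cmod (\<phi> (of_real T))"
    define P where "P = cmod (\<phi> (Complex 1 s))"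
    define D where "D = cmod (deriv \<phi> (Complex 1 s))"
    have s: "T \<le> \<bar>s\<bar>" "\<bar>s\<bar> \<le> 2 * T" using y T by (auto simp: s_def abs_mult Iset_def)
    have \<Phi>: "\<Phi> \<ge> 1" and P: "P \<ge> 1" using T by (auto simp: \<Phi>_def P_def halfplane_def intro!: norm_ge_1)
    note comparable = norm_phi_on_line_comparable[OF T s, folded \<Phi>_def P_def]
    have eq: "norm_dphiT T y = T * D / \<Phi>"
      using T by (simp add: norm_deriv_phiT[OF holo] D_def \<Phi>_def s_def)
    have "D \<le> 2 * schottky_const\<^sup>2 * P"
      using norm_deriv_le_omitting_zero[OF holo inj zero_notin_image, of "Complex 1 s"] by (simp add: D_def P_def)
    also have "\<dots> \<le> 2 * schottky_const\<^sup>2 * (M * \<Phi>)" using comparable(2) by (intro mult_left_mono) auto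
    finally have upper: "T * D / \<Phi> \<le> 2 * schottky_const\<^sup>2 * M * T"
      using T \<Phi> by (simp add: divide_le_eq mult_left_mono mult_ac)
    have "\<bar>s\<bar> > 0" using s T by linarith
    then have "c * \<bar>s\<bar> powr (- \<kappa>) * P > 0" using c P by simp
    then have lower_D: "c * \<bar>s\<bar> powr (- \<kappa>) * P / 4 \<le> D"
      using ball_in_image_imp_norm_deriv_ge[OF holo inj, of "Complex 1 s" "c * \<bar>s\<bar> powr (- \<kappa>) * P"]
        cov[of s] s T by (simp add: covers_rel_ball_def D_def P_def)
    have "c * (2 * T) powr (- \<kappa>) * (\<Phi> / M) \<le> c * \<bar>s\<bar> powr (- \<kappa>) * P"
      using comparable(1) powr_mono2'[of "- \<kappa>" "\<bar>s\<bar>" "2 * T"] s T M c \<Phi> \<kappa>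
      by (intro mult_mono mult_left_mono) (auto simp: divide_le_eq mult.commute)
    then have "c * (2 * T) powr (- \<kappa>) * (\<Phi> / M) / 4 \<le> D"
      by (rule order_trans[OF divide_right_mono lower_D]) simp
    then have "c * (2 * T) powr (- \<kappa>) / (4 * M) * T \<le> T * D / \<Phi>"
      using \<Phi> M T by (simp add: field_simps)
    moreover have "c * 2 powr (- \<kappa>) / (4 * M) * T powr (- \<kappa>) = c * (2 * T) powr (- \<kappa>) / (4 * M) * 1"
      using T by (simp add: powr_mult)
    moreover have "c * (2 * T) powr (- \<kappa>) / (4 * M) * 1 \<le> c * (2 * T) powr (- \<kappa>) / (4 * M) * T"
      using T c M by (intro mult_left_mono) auto
    ultimately show "c * 2 powr (- \<kappa>) / (4 * M) * T powr (- \<kappa>) \<le> norm_dphiT T y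
      \<and> norm_dphiT T y \<le> 2 * schottky_const\<^sup>2 * M * T"
      unfolding eq using upper by linarith
  qed (use \<kappa> in simp)
qed

lemma ln_norm_dphiT_bound:
  obtains K where "K \<ge> 0"
    "\<And>T y. T \<ge> max T0 3 \<Longrightarrow> y \<in> Iset \<Longrightarrow> norm_dphiT T y > 0 \<and> \<bar>ln (norm_dphiT T y)\<bar> \<le> K * ln T"
proof -
  obtain a b \<kappa> where ab: "a > 0" "b > 0" "\<kappa> \<ge> 0"
    and bounds: "\<And>T y. T \<ge> max T0 1 \<Longrightarrow> y \<in> Iset \<Longrightarrow>
        a * T powr (- \<kappa>) \<le> norm_dphiT T y \<and> norm_dphiT T y \<le> b * T"
    by (rule norm_deriv_phiT_powr_bounds) blast
  show ?thesis
  proof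
    show "\<kappa> + 1 + \<bar>ln a\<bar> + \<bar>ln b\<bar> \<ge> 0" using ab by simp
    fix T y assume T: "T \<ge> max T0 3" and y: "y \<in> Iset"
    have "exp 1 \<le> T" using exp_le T by simp
    with bounds[of T y] T y ab
    show "norm_dphiT T y > 0 \<and> \<bar>ln (norm_dphiT T y)\<bar> \<le> (\<kappa> + 1 + \<bar>ln a\<bar> + \<bar>ln b\<bar>) * ln T"
      using abs_ln_le_of_powr_bounds[of T a b \<kappa> "norm_dphiT T y"] by auto
  qed
qed

lemma continuous_on_norm_dphiT: "T > 0 \<Longrightarrow> continuous_on Iset (norm_dphiT T)"
  unfolding norm_deriv_phiT[OF holo]
  by (intro continuous_intros continuous_on_deriv_vertical_line[OF holo])
    (use norm_ge_1[of "of_real T"] in \<open>auto simp: halfplane_def\<close>)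

lemma integral_Iset_powr_norm_dphiT_bounds:
  obtains K where "K \<ge> 0" "\<And>T t. T \<ge> max T0 3 \<Longrightarrow>
      2 * exp (- (\<bar>t\<bar> * (K * ln T))) \<le> integral Iset (\<lambda>y. norm_dphiT T y powr t)
    \<and> integral Iset (\<lambda>y. norm_dphiT T y powr t) \<le> 2 * exp (\<bar>t\<bar> * (K * ln T))"
proof -
  obtain K where K: "K \<ge> 0"
    and ln_bound: "\<And>T y. T \<ge> max T0 3 \<Longrightarrow> y \<in> Iset \<Longrightarrow>
      norm_dphiT T y > 0 \<and> \<bar>ln (norm_dphiT T y)\<bar> \<le> K * ln T"
    by (rule ln_norm_dphiT_bound) blast
  show ?thesis
  proof (rule that[OF K], intro conjI)
    fix T t assume T: "T \<ge> max T0 3"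
    note bounds = integral_Iset_powr_bounds[OF continuous_on_norm_dphiT, of T "K * ln T" t]
    show "2 * exp (- (\<bar>t\<bar> * (K * ln T))) \<le> integral Iset (\<lambda>y. norm_dphiT T y powr t)"
      and "integral Iset (\<lambda>y. norm_dphiT T y powr t) \<le> 2 * exp (\<bar>t\<bar> * (K * ln T))"
      using bounds ln_bound[OF T] T by auto
  qed
qed

lemma beta_phiT_near_ln2:
  obtains K where "K \<ge> 0"
    "\<And>T t. T \<ge> max T0 3 \<Longrightarrow> \<bar>beta (phiT \<phi> T) (1/T) t - ln 2 / ln T\<bar> \<le> \<bar>t\<bar> * K"
proof -
  obtain K where K: "K \<ge> 0" and bounds: "\<And>T t. T \<ge> max T0 3 \<Longrightarrow>
      2 * exp (- (\<bar>t\<bar> * (K * ln T))) \<le> integral Iset (\<lambda>y. norm_dphiT T y powr t)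
    \<and> integral Iset (\<lambda>y. norm_dphiT T y powr t) \<le> 2 * exp (\<bar>t\<bar> * (K * ln T))"
    by (rule integral_Iset_powr_norm_dphiT_bounds) blast
  show ?thesis
  proof (rule that[OF K])
    fix T t assume T: "T \<ge> max T0 3"
    define I where "I = integral Iset (\<lambda>y. norm_dphiT T y powr t)"
    have lnT: "ln T > 0" using T by simp
    have I: "2 * exp (- (\<bar>t\<bar> * (K * ln T))) \<le> I" "I \<le> 2 * exp (\<bar>t\<bar> * (K * ln T))"
      using bounds[OF T, of t] by (simp_all add: I_def)
    have "I > 0" using I(1) exp_gt_zero by (smt (verit))
    then have "ln (2 * exp (- (\<bar>t\<bar> * (K * ln T)))) \<le> ln I" "ln I \<le> ln (2 * exp (\<bar>t\<bar> * (K * ln T)))"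
      using I by (subst ln_le_cancel_iff; simp)+
    then have "ln 2 - \<bar>t\<bar> * (K * ln T) \<le> ln I" "ln I \<le> ln 2 + \<bar>t\<bar> * (K * ln T)"
      by (simp_all add: ln_mult)
    then have "\<bar>ln I - ln 2\<bar> / ln T \<le> \<bar>t\<bar> * K"
      using lnT by (simp add: divide_le_eq abs_le_iff mult_ac)
    then show "\<bar>beta (phiT \<phi> T) (1/T) t - ln 2 / ln T\<bar> \<le> \<bar>t\<bar> * K"
      using lnT T by (simp add: beta_phiT I_def diff_divide_distrib[symmetric])
  qed
qed

lemma convex_on_beta_phiT:
  assumes T: "T \<ge> max T0 3"
  shows "convex_on UNIV (beta (phiT \<phi> T) (1/T))"
proof -
  obtain K where bounds: "\<And>t. 2 * exp (- (\<bar>t\<bar> * (K * ln T))) \<le> integral Iset (\<lambda>y. norm_dphiT T y powr t)"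
    using integral_Iset_powr_norm_dphiT_bounds T by metis
  obtain K' where pos: "\<And>y. y \<in> Iset \<Longrightarrow> norm_dphiT T y > 0"
    using ln_norm_dphiT_bound T by metis
  have "convex_on UNIV (\<lambda>t. ln (integral Iset (\<lambda>y. norm_dphiT T y powr t)))"
  proof (rule convex_on_ln_integral_powr[OF pos])
    show "(\<lambda>y. norm_dphiT T y powr t) integrable_on Iset" for t
      using T pos by (intro integrable_on_Iset continuous_on_powr continuous_on_norm_dphiT continuous_on_const)
        force+
    show "integral Iset (\<lambda>y. norm_dphiT T y powr t) > 0" for t
      using bounds[of t] exp_gt_zero by (smt (verit))
  qed
  then have "convex_on UNIV (\<lambda>t. ln (integral Iset (\<lambda>y. norm_dphiT T y powr t)) / ln T)"
    using T by (intro convex_on_cdiv) auto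
  moreover have "beta (phiT \<phi> T) (1/T) = (\<lambda>t. ln (integral Iset (\<lambda>y. norm_dphiT T y powr t)) / ln T)"
    using T by (simp add: beta_phiT fun_eq_iff)
  ultimately show ?thesis by simp
qed

lemma integral_Iset_norm_dphiT_power2_le:
  obtains C where "C > 0" "\<And>T. T \<ge> max T0 3 \<Longrightarrow> integral Iset (\<lambda>y. norm_dphiT T y powr 2) \<le> C * T"
proof
  define C where "C = 4 * (8 * (schottky_const\<^sup>2 + 1) * (M + 1))\<^sup>2"
  have M: "M \<ge> 1" by (rule M_ge_1)
  have "schottky_const\<^sup>2 + 1 > 0" by (rule add_nonneg_pos) simp_all
  then show "C > 0" using M by (simp add: C_def)
  fix T assume T: "T \<ge> max T0 3"
  define \<Phi> where "\<Phi> = cmod (\<phi> (of_real T))"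
  have \<Phi>: "\<Phi> \<ge> 1" unfolding \<Phi>_def using T by (intro norm_ge_1) (simp add: halfplane_def)
  have bound: "cmod (\<phi> \<zeta>) \<le> M * \<Phi>"
    if "0 < Re \<zeta>" "Re \<zeta> < 2" "T - 1 \<le> \<bar>Im \<zeta>\<bar>" "\<bar>Im \<zeta>\<bar> \<le> 2 * T + 1" for \<zeta>
  proof -
    have "\<zeta> \<in> QT T - QT (T/8)" using that T by (auto simp: QT_def)
    then show ?thesis unfolding \<Phi>_def using T by (intro doubling[OF _ _ real_in_annulus]) auto
  qed
  have "integral Iset (\<lambda>y. norm_dphiT T y powr 2)
      = (T / \<Phi>)\<^sup>2 * integral Iset (\<lambda>y. (cmod (deriv \<phi> (Complex 1 (T * y))))\<^sup>2)"
    using T by (simp add: norm_deriv_phiT[OF holo] \<Phi>_def power_divide power_mult_distrib)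
  also have "\<dots> \<le> (T / \<Phi>)\<^sup>2 * (4 * (8 * (schottky_const\<^sup>2 + 1) * (M * \<Phi> + 1))\<^sup>2 / T)"
    using T M \<Phi> bound by (intro mult_left_mono integral_Iset_power2_norm_deriv_le[OF holo inj]) auto
  also have "\<dots> = 4 * (8 * (schottky_const\<^sup>2 + 1) * ((M * \<Phi> + 1) / \<Phi>))\<^sup>2 * T"
    using T \<Phi> by (simp add: power2_eq_square field_simps)
  also have "\<dots> \<le> C * T"
    unfolding C_def using T M \<Phi>
    by (intro mult_right_mono mult_left_mono power_mono) (auto simp: divide_le_eq algebra_simps)
  finally show "integral Iset (\<lambda>y. norm_dphiT T y powr 2) \<le> C * T" .
qed

lemma beta_phiT_2_le:
  obtains C where "\<And>T. T \<ge> max T0 3 \<Longrightarrow> beta (phiT \<phi> T) (1/T) 2 \<le> 1 + ln C / ln T"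
proof -
  obtain C where C: "C > 0"
    and upper: "\<And>T. T \<ge> max T0 3 \<Longrightarrow> integral Iset (\<lambda>y. norm_dphiT T y powr 2) \<le> C * T"
    by (rule integral_Iset_norm_dphiT_power2_le) blast
  obtain K where lower: "\<And>T. T \<ge> max T0 3 \<Longrightarrow>
      2 * exp (- (\<bar>2\<bar> * (K * ln T))) \<le> integral Iset (\<lambda>y. norm_dphiT T y powr 2)"
    using integral_Iset_powr_norm_dphiT_bounds by metis
  show ?thesis
  proof (rule that)
    fix T assume T: "T \<ge> max T0 3"
    have lnT: "ln T > 0" using T by simp
    have "integral Iset (\<lambda>y. norm_dphiT T y powr 2) > 0" using lower[OF T] exp_gt_zero by (smt (verit))
    then have "ln (integral Iset (\<lambda>y. norm_dphiT T y powr 2)) \<le> ln (C * T)"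
      using upper[OF T] by (subst ln_le_cancel_iff) auto
    then have "ln (integral Iset (\<lambda>y. norm_dphiT T y powr 2)) \<le> ln C + ln T"
      using C T by (simp add: ln_mult)
    then show "beta (phiT \<phi> T) (1/T) 2 \<le> 1 + ln C / ln T"
      using T lnT by (simp add: beta_phiT divide_le_eq algebra_simps)
  qed
qed

lemma beta_phiT_eventually_bounded: "\<exists>B. eventually (\<lambda>T. \<bar>beta (phiT \<phi> T) (1/T) t\<bar> \<le> B) at_top"
proof -
  obtain K where near: "\<And>T. T \<ge> max T0 3 \<Longrightarrow> \<bar>beta (phiT \<phi> T) (1/T) t - ln 2 / ln T\<bar> \<le> \<bar>t\<bar> * K"
    using beta_phiT_near_ln2 by metis
  have bound: "\<bar>beta (phiT \<phi> T) (1/T) t\<bar> \<le> ln 2 + \<bar>t\<bar> * K" if T: "T \<ge> max T0 3" for T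
  proof -
    have "ln T \<ge> 1" using T exp_le by (simp add: ln_ge_iff)
    then have "0 \<le> ln 2 / ln T" "ln 2 / ln T \<le> ln 2" by (simp_all add: divide_le_eq)
    then show ?thesis using near[OF T] by linarith
  qed
  have "eventually (\<lambda>T. \<bar>beta (phiT \<phi> T) (1/T) t\<bar> \<le> ln 2 + \<bar>t\<bar> * K) at_top"
    by (rule eventually_mono[OF eventually_ge_at_top[of "max T0 3"] bound])
  then show ?thesis by blast
qed

lemma beta_inf_finite: "\<bar>beta_inf \<phi> t\<bar> \<noteq> \<infinity>"
proof -
  obtain B where "eventually (\<lambda>T. \<bar>beta (phiT \<phi> T) (1/T) t\<bar> \<le> B) at_top"
    using beta_phiT_eventually_bounded by blast
  then show ?thesis
    unfolding beta_inf_def by (rule Limsup_ereal_finite[OF trivial_limit_at_top_linorder])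
qed

lemma convex_on_beta_inf: "convex_on UNIV (\<lambda>t. real_of_ereal (beta_inf \<phi> t))"
  unfolding beta_inf_def
  by (intro convex_on_Limsup_ereal[OF trivial_limit_at_top_linorder] beta_phiT_eventually_bounded
      eventually_mono[OF eventually_ge_at_top[of "max T0 3"] convex_on_beta_phiT])

lemma beta_inf_0: "beta_inf \<phi> 0 = 0"
proof -
  obtain K where near: "\<And>T. T \<ge> max T0 3 \<Longrightarrow> \<bar>beta (phiT \<phi> T) (1/T) 0 - ln 2 / ln T\<bar> \<le> \<bar>0\<bar> * K"
    using beta_phiT_near_ln2 by metis
  have "eventually (\<lambda>T. ereal (ln 2 / ln T) = ereal (beta (phiT \<phi> T) (1/T) 0)) at_top"
    using eventually_ge_at_top[of "max T0 3"] by eventually_elim (use near in simp)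
  with tendsto_ereal[OF tendsto_const_div_ln] have "((\<lambda>T. ereal (beta (phiT \<phi> T) (1/T) 0)) \<longlongrightarrow> 0) at_top"
    by (auto intro: Lim_transform_eventually simp: zero_ereal_def)
  then show ?thesis unfolding beta_inf_def by (intro lim_imp_Limsup) simp_all
qed

lemma beta_inf_2: "beta_inf \<phi> 2 \<le> 1"
proof -
  obtain C where two: "\<And>T. T \<ge> max T0 3 \<Longrightarrow> beta (phiT \<phi> T) (1/T) 2 \<le> 1 + ln C / ln T"
    by (rule beta_phiT_2_le) blast
  have "((\<lambda>T. ereal (1 + ln C / ln T)) \<longlongrightarrow> 1) at_top"
    using tendsto_ereal[OF tendsto_add[OF tendsto_const tendsto_const_div_ln]] by (simp add: one_ereal_def)
  then have "Limsup at_top (\<lambda>T. ereal (1 + ln C / ln T)) = 1" by (intro lim_imp_Limsup) simp_all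
  moreover have "Limsup at_top (\<lambda>T. ereal (beta (phiT \<phi> T) (1/T) 2)) \<le> Limsup at_top (\<lambda>T. ereal (1 + ln C / ln T))"
    using eventually_ge_at_top[of "max T0 3"] by (intro Limsup_mono) (auto elim: eventually_mono simp: two)
  ultimately show ?thesis by (simp add: beta_inf_def)
qed

end

theorem proposition3p3:
  fixes \<Omega> :: "complex set" and \<phi> :: "complex \<Rightarrow> complex" and \<gamma> :: real
  assumes gamma: "0 < \<gamma>" "\<gamma> < 1"
    and Omega_sub: "\<Omega> \<subseteq> {z. cmod z > exp \<gamma>}"
    and Omega_open: "open \<Omega>" and Omega_conn: "connected \<Omega>"
    and Omega_sc: "simply_connected \<Omega>"
    and Omega_unb: "\<not> bounded \<Omega>"
    and holo: "\<phi> holomorphic_on halfplane"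
    and inj: "inj_on \<phi> halfplane"
    and onto: "\<phi> ` halfplane = \<Omega>"
    and proper: "\<And>\<xi> :: nat \<Rightarrow> complex. (\<forall>n. \<xi> n \<in> halfplane) \<Longrightarrow>
        filterlim (\<lambda>n. cmod (\<xi> n)) at_top sequentially \<Longrightarrow>
        filterlim (\<lambda>n. cmod (\<phi> (\<xi> n))) at_top sequentially"
    and doubling: "\<exists>M T0. \<forall>T\<ge>T0. \<forall>\<xi>\<in>QT T - QT (T / 8). \<forall>\<xi>'\<in>QT T - QT (T / 8).
        cmod (\<phi> \<xi>) \<le> M * cmod (\<phi> \<xi>')"
  shows "(\<forall>t. \<bar>beta_inf \<phi> t\<bar> \<noteq> \<infinity>)
    \<and> convex_on UNIV (\<lambda>t. real_of_ereal (beta_inf \<phi> t))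
    \<and> beta_inf \<phi> 0 = 0
    \<and> beta_inf \<phi> 2 \<le> 1"
proof -
  obtain M T0 where doubling_M: "\<forall>T\<ge>T0. \<forall>\<xi>\<in>QT T - QT (T / 8). \<forall>\<xi>'\<in>QT T - QT (T / 8).
      cmod (\<phi> \<xi>) \<le> M * cmod (\<phi> \<xi>')"
    using doubling by blast
  interpret doubling_conformal_map \<phi> M T0
  proof
    show "cmod (\<phi> \<xi>) \<ge> 1" if "\<xi> \<in> halfplane" for \<xi>
    proof -
      have "exp \<gamma> < cmod (\<phi> \<xi>)" using that onto Omega_sub by blast
      moreover have "1 \<le> exp \<gamma>" using gamma(1) by simp
      ultimately show ?thesis by linarith
    qed
  qed (use holo inj onto Omega_open doubling_M in auto)
  show ?thesis using beta_inf_finite convex_on_beta_inf beta_inf_0 beta_inf_2 by blast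
qed

end
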